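(* Let $\mathsf{K}$ be a congruence distributive quasivariety such that every nontrivial subalgebra of a member of $\mathsf{K}_{\mathrm{RFSI}}$ belongs to $\mathsf{K}_{\mathrm{RFSI}}$. If $\mathsf{K}$ has the weak ES property, then the variety $\mathbb{V}(\mathsf{K})$ generated by $\mathsf{K}$ is arithmetical, i.e., both congruence distributive and congruence permutable.
   Context: A quasivariety is a class of similar algebras closed under isomorphic copies, subalgebras, direct products and ultraproducts. For $\mathbf{A}\in\mathsf{K}$, $\mathrm{Con}_{\mathsf{K}}(\mathbf{A})$ is the lattice of congruences $\theta$ with $\mathbf{A}/\theta\in\mathsf{K}$; $\mathsf{K}$ is congruence distributive if all these lattices are distributive. $\mathsf{K}_{\mathrm{RFSI}}$ is the class of nontrivial members of $\mathsf{K}$ that are finitely subdirectly irreducible relative to $\mathsf{K}$ (every subdirect embedding into a finite product of members of $\mathsf{K}$ has a projection that is an isomorphism). $\mathsf{K}$ has the weak ES property if every $\mathsf{K}$-epimorphism (homomorphism $f\colon\mathbf{A}\to\mathbf{B}$ in $\mathsf{K}$ with $g\circ f=h\circ f\Rightarrow g=h$ for all homomorphisms $g,h$ from $\mathbf{B}$ into members of $\mathsf{K}$) between finitely generated members is surjective. A variety is congruence permutable if $\theta_1\circ\theta_2=\theta_2\circ\theta_1$ for all congruences of every member. *)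

theory Defs
  imports Main
begin

datatype 'f trm = Var nat | Op 'f "'f trm list"

record ('f, 'a) alg =
  carrier :: "'a set"
  oper :: "'f \<Rightarrow> 'a list \<Rightarrow> 'a"

fun wf_trm :: "('f \<Rightarrow> nat) \<Rightarrow> 'f trm \<Rightarrow> bool" where
  "wf_trm ar (Var n) = True"
| "wf_trm ar (Op f ts) = (length ts = ar f \<and> (\<forall>t\<in>set ts. wf_trm ar t))"

fun eval :: "('f, 'a) alg \<Rightarrow> (nat \<Rightarrow> 'a) \<Rightarrow> 'f trm \<Rightarrow> 'a" where
  "eval A v (Var n) = v n"
| "eval A v (Op f ts) = oper A f (map (eval A v) ts)"

type_synonym 'f eqn = "'f trm \<times> 'f trm"
(* a quasi-identity: (premises, conclusion); an identity has no premises *)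
type_synonym 'f qid = "'f eqn list \<times> 'f eqn"

definition wf_qid :: "('f \<Rightarrow> nat) \<Rightarrow> 'f qid \<Rightarrow> bool" where
  "wf_qid ar q = ((\<forall>e\<in>set (fst q). wf_trm ar (fst e) \<and> wf_trm ar (snd e))
      \<and> wf_trm ar (fst (snd q)) \<and> wf_trm ar (snd (snd q)))"

definition closed_set :: "('f \<Rightarrow> nat) \<Rightarrow> ('f, 'a) alg \<Rightarrow> 'a set \<Rightarrow> bool" where
  "closed_set ar A S = (\<forall>f xs. length xs = ar f \<and> set xs \<subseteq> S \<longrightarrow> oper A f xs \<in> S)"

definition algebra :: "('f \<Rightarrow> nat) \<Rightarrow> ('f, 'a) alg \<Rightarrow> bool" where
  "algebra ar A = (carrier A \<noteq> {} \<and> closed_set ar A (carrier A))"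

definition sat_qid :: "('f, 'a) alg \<Rightarrow> 'f qid \<Rightarrow> bool" where
  "sat_qid A q = (\<forall>v. range v \<subseteq> carrier A \<longrightarrow>
      (\<forall>e\<in>set (fst q). eval A v (fst e) = eval A v (snd e)) \<longrightarrow>
      eval A v (fst (snd q)) = eval A v (snd (snd q)))"

definition in_qv :: "('f \<Rightarrow> nat) \<Rightarrow> 'f qid set \<Rightarrow> ('f, 'a) alg \<Rightarrow> bool" where
  "in_qv ar Qs A = (algebra ar A \<and> (\<forall>q\<in>Qs. sat_qid A q))"

definition hom :: "('f \<Rightarrow> nat) \<Rightarrow> ('f, 'a) alg \<Rightarrow> ('f, 'b) alg \<Rightarrow> ('a \<Rightarrow> 'b) \<Rightarrow> bool" where
  "hom ar A B h = ((\<forall>x\<in>carrier A. h x \<in> carrier B) \<and>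
     (\<forall>f xs. length xs = ar f \<and> set xs \<subseteq> carrier A \<longrightarrow> h (oper A f xs) = oper B f (map h xs)))"

definition congruence :: "('f \<Rightarrow> nat) \<Rightarrow> ('f, 'a) alg \<Rightarrow> ('a \<times> 'a) set \<Rightarrow> bool" where
  "congruence ar A \<theta> = (equiv (carrier A) \<theta> \<and>
     (\<forall>f xs ys. length xs = ar f \<and> length ys = ar f \<and> list_all2 (\<lambda>x y. (x, y) \<in> \<theta>) xs ys
        \<longrightarrow> (oper A f xs, oper A f ys) \<in> \<theta>))"

definition quot :: "('f, 'a) alg \<Rightarrow> ('a \<times> 'a) set \<Rightarrow> ('f, 'a set) alg" where
  "quot A \<theta> = \<lparr>carrier = carrier A // \<theta>,
      oper = (\<lambda>f Xs. \<theta> `` {oper A f (map (\<lambda>X. SOME x. x \<in> X) Xs)})\<rparr>"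

definition Con :: "('f \<Rightarrow> nat) \<Rightarrow> ('f, 'a) alg \<Rightarrow> ('a \<times> 'a) set set" where
  "Con ar A = {\<theta>. congruence ar A \<theta>}"

definition ConK :: "('f \<Rightarrow> nat) \<Rightarrow> 'f qid set \<Rightarrow> ('f, 'a) alg \<Rightarrow> ('a \<times> 'a) set set" where
  "ConK ar Qs A = {\<theta>. congruence ar A \<theta> \<and> in_qv ar Qs (quot A \<theta>)}"

(* join in an intersection-closed family of relations ordered by inclusion (meet = intersection) *)
definition lat_join :: "'r set set \<Rightarrow> 'r set \<Rightarrow> 'r set \<Rightarrow> 'r set" where
  "lat_join L x y = \<Inter>{z\<in>L. x \<union> y \<subseteq> z}"

definition distrib_family :: "'r set set \<Rightarrow> bool" where
  "distrib_family L = (\<forall>x\<in>L. \<forall>y\<in>L. \<forall>z\<in>L. x \<inter> lat_join L y z = lat_join L (x \<inter> y) (x \<inter> z))"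

definition subuniverse :: "('f \<Rightarrow> nat) \<Rightarrow> ('f, 'a) alg \<Rightarrow> 'a set \<Rightarrow> bool" where
  "subuniverse ar A S = (S \<subseteq> carrier A \<and> S \<noteq> {} \<and> closed_set ar A S)"

definition Sg :: "('f \<Rightarrow> nat) \<Rightarrow> ('f, 'a) alg \<Rightarrow> 'a set \<Rightarrow> 'a set" where
  "Sg ar A X = \<Inter>{S. X \<subseteq> S \<and> S \<subseteq> carrier A \<and> closed_set ar A S}"

definition fin_gen :: "('f \<Rightarrow> nat) \<Rightarrow> ('f, 'a) alg \<Rightarrow> bool" where
  "fin_gen ar A = (\<exists>X. finite X \<and> X \<subseteq> carrier A \<and> Sg ar A X = carrier A)"

definition nontrivial :: "('f, 'a) alg \<Rightarrow> bool" where
  "nontrivial A = (\<exists>a\<in>carrier A. \<exists>b\<in>carrier A. a \<noteq> b)"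

(* relatively finitely subdirectly irreducible: nontrivial member of K such that for every
   subdirect embedding a \<mapsto> (h_0 a, ..., h_{n-1} a) into a finite product of members B_i of K
   (surjective homomorphisms h_i, jointly injective), some projection h_i is an isomorphism *)
definition RFSI :: "('f \<Rightarrow> nat) \<Rightarrow> 'f qid set \<Rightarrow> ('f, 'a) alg \<Rightarrow> bool" where
  "RFSI ar Qs A = (in_qv ar Qs A \<and> nontrivial A \<and>
     (\<forall>(n::nat) (B :: nat \<Rightarrow> ('f, 'a) alg) (h :: nat \<Rightarrow> 'a \<Rightarrow> 'a).
        (\<forall>i<n. in_qv ar Qs (B i) \<and> hom ar A (B i) (h i) \<and> h i ` carrier A = carrier (B i)) \<and>
        (\<forall>a\<in>carrier A. \<forall>b\<in>carrier A. (\<forall>i<n. h i a = h i b) \<longrightarrow> a = b)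
        \<longrightarrow> (\<exists>i<n. inj_on (h i) (carrier A))))"

definition K_epi :: "('f \<Rightarrow> nat) \<Rightarrow> 'f qid set \<Rightarrow> ('f, 'a) alg \<Rightarrow> ('f, 'b) alg \<Rightarrow> ('a \<Rightarrow> 'b) \<Rightarrow> bool" where
  "K_epi ar Qs A B f = (hom ar A B f \<and>
     (\<forall>(C :: ('f, 'b) alg) g h. in_qv ar Qs C \<and> hom ar B C g \<and> hom ar B C h \<and>
        (\<forall>x\<in>carrier A. g (f x) = h (f x)) \<longrightarrow> (\<forall>y\<in>carrier B. g y = h y)))"

(* the hypotheses, evaluated for all algebras whose universe lies in the type 'a *)
definition rel_CD :: "('f \<Rightarrow> nat) \<Rightarrow> 'f qid set \<Rightarrow> 'a itself \<Rightarrow> bool" where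
  "rel_CD ar Qs T = (\<forall>A :: ('f, 'a) alg. in_qv ar Qs A \<longrightarrow> distrib_family (ConK ar Qs A))"

definition RFSI_sub_closed :: "('f \<Rightarrow> nat) \<Rightarrow> 'f qid set \<Rightarrow> 'a itself \<Rightarrow> bool" where
  "RFSI_sub_closed ar Qs T = (\<forall>(A :: ('f, 'a) alg) S.
     RFSI ar Qs A \<and> subuniverse ar A S \<and> (\<exists>a\<in>S. \<exists>b\<in>S. a \<noteq> b)
       \<longrightarrow> RFSI ar Qs (A\<lparr>carrier := S\<rparr>))"

definition weak_ES :: "('f \<Rightarrow> nat) \<Rightarrow> 'f qid set \<Rightarrow> 'a itself \<Rightarrow> bool" where
  "weak_ES ar Qs T = (\<forall>(A :: ('f, 'a) alg) (B :: ('f, 'a) alg) f.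
     in_qv ar Qs A \<and> in_qv ar Qs B \<and> fin_gen ar A \<and> fin_gen ar B \<and> K_epi ar Qs A B f
       \<longrightarrow> f ` carrier A = carrier B)"

(* membership in the variety V(K) = Mod(Id(K)): models of all identities valid in K *)
definition in_var_gen :: "('f \<Rightarrow> nat) \<Rightarrow> 'f qid set \<Rightarrow> 'a itself \<Rightarrow> ('f, 'b) alg \<Rightarrow> bool" where
  "in_var_gen ar Qs T B = (algebra ar B \<and>
     (\<forall>s t. wf_trm ar s \<and> wf_trm ar t \<and>
        (\<forall>A :: ('f, 'a) alg. in_qv ar Qs A \<longrightarrow> sat_qid A ([], (s, t)))
        \<longrightarrow> sat_qid B ([], (s, t))))"

end

theory Submission
  imports Defs
begin

(*
  Let F be the member of K generated by x0, x1, x2, x3 subject to exactly those identities that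
  hold in K after each of the substitutions (x0, x1, x2, x3) := (x, y, y, x), (x, y, x, x),
  (y, y, x, x); it is a subdirect product of three algebras, with kernels eta_1, eta_2, eta_3.
  The kernel of a homomorphism from F onto a member of K_RFSI is meet-irreducible among the
  relative congruences of F, and by relative congruence distributivity even meet-prime. As
  K_RFSI is closed under nontrivial subalgebras, this applies to every homomorphism h of F into
  a member of K_RFSI: ker h contains some eta_i, which forces h(x3) = p(h(x0), h(x1), h(x2)) for
  the Pixley operation p(a, b, c) = (if a = b then c else a). Every member of K is a subdirect
  product of members of K_RFSI, so the inclusion of the subalgebra generated by x0, x1, x2 into F
  is a K-epimorphism. By the weak ES property it is onto, hence x3 = t(x0, x1, x2) for a term t,
  which is then a Pixley term for K and so for V(K). A Pixley term makes congruences permute and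
  distribute.
*)

fun subst :: "(nat \<Rightarrow> 'f trm) \<Rightarrow> 'f trm \<Rightarrow> 'f trm" where
  "subst \<sigma> (Var n) = \<sigma> n"
| "subst \<sigma> (Op f ts) = Op f (map (subst \<sigma>) ts)"

lemma eval_subst: "eval A w (subst \<sigma> t) = eval A (\<lambda>n. eval A w (\<sigma> n)) t"
  by (induction t) (auto cong: map_cong)

lemma subst_subst: "subst \<sigma> (subst \<tau> t) = subst (\<lambda>n. subst \<sigma> (\<tau> n)) t"
  by (induction t) auto

lemma wf_subst: "wf_trm ar t \<Longrightarrow> (\<And>n. wf_trm ar (\<sigma> n)) \<Longrightarrow> wf_trm ar (subst \<sigma> t)"
  by (induction t) auto

lemma eval_in_closed_set:
  "closed_set ar A T \<Longrightarrow> range v \<subseteq> T \<Longrightarrow> wf_trm ar t \<Longrightarrow> eval A v t \<in> T"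
proof (induction t)
  case (Op f ts)
  then have "set (map (eval A v) ts) \<subseteq> T" "length (map (eval A v) ts) = ar f" by auto
  then show ?case using Op.prems(1) unfolding closed_set_def by auto
qed auto

lemma eval_in_carrier:
  "algebra ar A \<Longrightarrow> range v \<subseteq> carrier A \<Longrightarrow> wf_trm ar t \<Longrightarrow> eval A v t \<in> carrier A"
  unfolding algebra_def by (blast intro: eval_in_closed_set)

lemma oper_in_carrier:
  "algebra ar A \<Longrightarrow> length xs = ar f \<Longrightarrow> set xs \<subseteq> carrier A \<Longrightarrow> oper A f xs \<in> carrier A"
  unfolding algebra_def closed_set_def by blast

lemma eval_carrier_update: "eval (A\<lparr>carrier := S\<rparr>) v t = eval A v t"
  by (induction t) (auto cong: map_cong)

lemma closed_set_carrier_update: "closed_set ar (A\<lparr>carrier := S\<rparr>) T = closed_set ar A T"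
  by (simp add: closed_set_def)

lemma in_qv_subalgebra:
  assumes "in_qv ar Qs A" "subuniverse ar A S"
  shows "in_qv ar Qs (A\<lparr>carrier := S\<rparr>)"
  using assms unfolding in_qv_def algebra_def subuniverse_def sat_qid_def
  by (auto simp: closed_set_carrier_update eval_carrier_update)

lemma homD:
  "hom ar A B h \<Longrightarrow> length xs = ar f \<Longrightarrow> set xs \<subseteq> carrier A \<Longrightarrow> h (oper A f xs) = oper B f (map h xs)"
  unfolding hom_def by blast

lemma hom_into: "hom ar A B h \<Longrightarrow> x \<in> carrier A \<Longrightarrow> h x \<in> carrier B"
  unfolding hom_def by blast

lemma hom_comp:
  assumes "hom ar A B g" "hom ar B C h"
  shows "hom ar A C (h \<circ> g)"
  unfolding hom_def
proof (intro conjI allI impI ballI)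
  fix f xs assume xs: "length xs = ar f \<and> set xs \<subseteq> carrier A"
  then have "set (map g xs) \<subseteq> carrier B" using assms(1) by (auto intro: hom_into)
  with xs show "(h \<circ> g) (oper A f xs) = oper C f (map (h \<circ> g) xs)"
    using assms by (simp add: homD)
qed (use assms in \<open>auto intro: hom_into\<close>)

lemma hom_eval:
  assumes "hom ar A B h" "algebra ar A" "range v \<subseteq> carrier A"
  shows "wf_trm ar t \<Longrightarrow> h (eval A v t) = eval B (h \<circ> v) t"
proof (induction t)
  case (Op f ts)
  have "set (map (eval A v) ts) \<subseteq> carrier A" "length (map (eval A v) ts) = ar f"
    using Op.prems assms(2,3) by (auto intro!: eval_in_carrier)
  then have "h (eval A v (Op f ts)) = oper B f (map h (map (eval A v) ts))"
    using assms(1) by (simp add: homD)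
  also have "\<dots> = eval B (h \<circ> v) (Op f ts)"
    using Op by (auto simp: comp_def cong: map_cong)
  finally show ?case .
qed simp

lemma hom_image_closed:
  assumes "algebra ar A" "hom ar A B h"
  shows "closed_set ar B (h ` carrier A)"
  unfolding closed_set_def
proof (intro allI impI)
  fix f ys assume ys: "length ys = ar f \<and> set ys \<subseteq> h ` carrier A"
  let ?xs = "map (inv_into (carrier A) h) ys"
  have xs: "set ?xs \<subseteq> carrier A" "map h ?xs = ys"
    using ys by (auto simp: inv_into_into f_inv_into_f map_idI subset_iff)
  have "h (oper A f ?xs) = oper B f (map h ?xs)"
    using assms(2) ys xs(1) by (simp add: homD)
  then have "oper B f ys = h (oper A f ?xs)"
    unfolding xs(2) by simp
  moreover have "oper A f ?xs \<in> carrier A"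
    using oper_in_carrier[OF assms(1)] xs(1) ys by simp
  ultimately show "oper B f ys \<in> h ` carrier A" by blast
qed

definition kernel_rel :: "('f, 'a) alg \<Rightarrow> ('a \<Rightarrow> 'b) \<Rightarrow> ('a \<times> 'a) set" where
  "kernel_rel A h = {(x, y). x \<in> carrier A \<and> y \<in> carrier A \<and> h x = h y}"

lemma congruence_subset: "congruence ar A \<theta> \<Longrightarrow> \<theta> \<subseteq> carrier A \<times> carrier A"
  unfolding congruence_def equiv_def refl_on_def by blast

lemma congruence_refl: "congruence ar A \<theta> \<Longrightarrow> x \<in> carrier A \<Longrightarrow> (x, x) \<in> \<theta>"
  unfolding congruence_def equiv_def refl_on_def by blast

lemma congruence_sym: "congruence ar A \<theta> \<Longrightarrow> (x, y) \<in> \<theta> \<Longrightarrow> (y, x) \<in> \<theta>"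
  unfolding congruence_def equiv_def sym_def by blast

lemma congruence_trans: "congruence ar A \<theta> \<Longrightarrow> (x, y) \<in> \<theta> \<Longrightarrow> (y, z) \<in> \<theta> \<Longrightarrow> (x, z) \<in> \<theta>"
  unfolding congruence_def equiv_def trans_def by blast

lemma congruence_compat:
  "congruence ar A \<theta> \<Longrightarrow> length xs = ar f \<Longrightarrow> length ys = ar f \<Longrightarrow>
    list_all2 (\<lambda>x y. (x, y) \<in> \<theta>) xs ys \<Longrightarrow> (oper A f xs, oper A f ys) \<in> \<theta>"
  unfolding congruence_def by blast

lemma congruenceI:
  assumes "equiv (carrier A) \<theta>"
    and "\<And>f xs ys. length xs = ar f \<Longrightarrow> length ys = ar f \<Longrightarrow>
           list_all2 (\<lambda>x y. (x, y) \<in> \<theta>) xs ys \<Longrightarrow> (oper A f xs, oper A f ys) \<in> \<theta>"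
  shows "congruence ar A \<theta>"
  using assms unfolding congruence_def by blast

lemma congruence_eval:
  assumes "congruence ar A \<theta>" "\<And>n. (v n, v' n) \<in> \<theta>"
  shows "wf_trm ar t \<Longrightarrow> (eval A v t, eval A v' t) \<in> \<theta>"
proof (induction t)
  case (Op f ts)
  then have "list_all2 (\<lambda>x y. (x, y) \<in> \<theta>) (map (eval A v) ts) (map (eval A v') ts)"
    by (auto simp: list.rel_map list_all2_same)
  then show ?case using assms(1) Op.prems by (auto intro: congruence_compat)
qed (use assms in auto)

lemma congruence_kernel:
  assumes "algebra ar A" "hom ar A B h"
  shows "congruence ar A (kernel_rel A h)"
  unfolding congruence_def
proof (intro conjI allI impI)
  show "equiv (carrier A) (kernel_rel A h)"
    by (auto simp: equiv_def refl_on_def sym_def trans_def kernel_rel_def)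
  fix f xs ys
  assume xys: "length xs = ar f \<and> length ys = ar f \<and>
    list_all2 (\<lambda>x y. (x, y) \<in> kernel_rel A h) xs ys"
  then have xs: "set xs \<subseteq> carrier A" and ys: "set ys \<subseteq> carrier A" and hxy: "map h xs = map h ys"
    by (auto simp: kernel_rel_def list_all2_conv_all_nth set_conv_nth intro!: nth_equalityI)
  have "h (oper A f xs) = oper B f (map h xs)" using assms(2) xys xs by (simp add: homD)
  also have "\<dots> = h (oper A f ys)" unfolding hxy using assms(2) xys ys by (simp add: homD)
  finally have "h (oper A f xs) = h (oper A f ys)" .
  then show "(oper A f xs, oper A f ys) \<in> kernel_rel A h"
    using assms(1) xys xs ys by (simp add: kernel_rel_def oper_in_carrier)
qed

lemma Sg_upper: "X \<subseteq> Sg ar A X"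
  unfolding Sg_def by blast

lemma Sg_least: "X \<subseteq> T \<Longrightarrow> T \<subseteq> carrier A \<Longrightarrow> closed_set ar A T \<Longrightarrow> Sg ar A X \<subseteq> T"
  unfolding Sg_def by (rule Inter_lower) simp

lemma Sg_subset_carrier: "algebra ar A \<Longrightarrow> X \<subseteq> carrier A \<Longrightarrow> Sg ar A X \<subseteq> carrier A"
  by (rule Sg_least) (simp_all add: algebra_def)

lemma closed_set_Sg: "closed_set ar A (Sg ar A X)"
  unfolding closed_set_def Sg_def by blast

lemma subuniverse_Sg:
  assumes "algebra ar A" "X \<subseteq> carrier A" "X \<noteq> {}"
  shows "subuniverse ar A (Sg ar A X)"
  using Sg_upper[of X ar A] Sg_subset_carrier[OF assms(1,2)] closed_set_Sg assms(3)
  by (auto simp: subuniverse_def)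

lemma Sg_carrier_update:
  assumes "algebra ar A" "X \<subseteq> carrier A"
  shows "Sg ar (A\<lparr>carrier := Sg ar A X\<rparr>) X = Sg ar A X"
proof
  show sub: "Sg ar (A\<lparr>carrier := Sg ar A X\<rparr>) X \<subseteq> Sg ar A X"
    by (rule Sg_least) (simp_all add: Sg_upper closed_set_Sg closed_set_carrier_update)
  show "Sg ar A X \<subseteq> Sg ar (A\<lparr>carrier := Sg ar A X\<rparr>) X"
  proof (rule Sg_least)
    show "Sg ar (A\<lparr>carrier := Sg ar A X\<rparr>) X \<subseteq> carrier A"
      using sub Sg_subset_carrier[OF assms] by (rule subset_trans)
    have "closed_set ar (A\<lparr>carrier := Sg ar A X\<rparr>) (Sg ar (A\<lparr>carrier := Sg ar A X\<rparr>) X)"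
      by (rule closed_set_Sg)
    then show "closed_set ar A (Sg ar (A\<lparr>carrier := Sg ar A X\<rparr>) X)"
      by (simp only: closed_set_carrier_update)
  qed (rule Sg_upper)
qed

lemma Sg_range_eval:
  assumes A: "algebra ar A" and v: "range v \<subseteq> carrier A"
  shows "Sg ar A (range v) \<subseteq> {eval A v t | t. wf_trm ar t}"
proof (rule Sg_least)
  show "range v \<subseteq> {eval A v t |t. wf_trm ar t}"
    by (auto intro!: exI[where x="Var _"])
  show "{eval A v t |t. wf_trm ar t} \<subseteq> carrier A"
    using eval_in_carrier[OF A v] by auto
  show "closed_set ar A {eval A v t |t. wf_trm ar t}"
    unfolding closed_set_def
  proof (intro allI impI)
    fix f xs assume xs: "length xs = ar f \<and> set xs \<subseteq> {eval A v t |t. wf_trm ar t}"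
    have "\<forall>x\<in>set xs. \<exists>t. wf_trm ar t \<and> x = eval A v t" using xs by blast
    then obtain term_of where "\<forall>x\<in>set xs. wf_trm ar (term_of x) \<and> x = eval A v (term_of x)"
      by (rule bchoice[elim_format]) blast
    then have "map (eval A v) (map term_of xs) = xs" "wf_trm ar (Op f (map term_of xs))"
      using xs by (auto simp: map_idI)
    then have "oper A f xs = eval A v (Op f (map term_of xs))" "wf_trm ar (Op f (map term_of xs))"
      by auto
    then show "oper A f xs \<in> {eval A v t |t. wf_trm ar t}" by blast
  qed
qed

lemma hom_eq_on_Sg:
  assumes "algebra ar A" "hom ar A C g" "hom ar A C h" "X \<subseteq> carrier A" "\<forall>x\<in>X. g x = h x"
  shows "\<forall>y\<in>Sg ar A X. g y = h y"
proof -
  have "closed_set ar A {y\<in>carrier A. g y = h y}"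
    unfolding closed_set_def
  proof (intro allI impI)
    fix f xs assume xs: "length xs = ar f \<and> set xs \<subseteq> {y \<in> carrier A. g y = h y}"
    then have A: "set xs \<subseteq> carrier A" and gh: "map g xs = map h xs" by auto
    have "g (oper A f xs) = oper C f (map g xs)" using assms(2) xs A by (simp add: homD)
    also have "\<dots> = h (oper A f xs)" unfolding gh using assms(3) xs A by (simp add: homD)
    finally have "g (oper A f xs) = h (oper A f xs)" .
    then show "oper A f xs \<in> {y \<in> carrier A. g y = h y}"
      using oper_in_carrier[OF assms(1)] xs by auto
  qed
  then have "Sg ar A X \<subseteq> {y\<in>carrier A. g y = h y}"
    using assms(4,5) by (intro Sg_least) auto
  then show ?thesis by auto
qed

section \<open>Relative congruences\<close>

definition K_congruence :: "('f \<Rightarrow> nat) \<Rightarrow> 'f qid set \<Rightarrow> ('f, 'a) alg \<Rightarrow> ('a \<times> 'a) set \<Rightarrow> bool" where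
  "K_congruence ar Qs A \<theta> = (congruence ar A \<theta> \<and>
     (\<forall>q\<in>Qs. \<forall>v. range v \<subseteq> carrier A \<longrightarrow>
        (\<forall>e\<in>set (fst q). (eval A v (fst e), eval A v (snd e)) \<in> \<theta>) \<longrightarrow>
        (eval A v (fst (snd q)), eval A v (snd (snd q))) \<in> \<theta>))"

lemma K_congruenceI:
  assumes "equiv (carrier A) \<theta>"
    and "\<And>f xs ys. length xs = ar f \<Longrightarrow> length ys = ar f \<Longrightarrow>
           list_all2 (\<lambda>x y. (x, y) \<in> \<theta>) xs ys \<Longrightarrow> (oper A f xs, oper A f ys) \<in> \<theta>"
    and "\<And>q v. q \<in> Qs \<Longrightarrow> range v \<subseteq> carrier A \<Longrightarrow>
           \<forall>e\<in>set (fst q). (eval A v (fst e), eval A v (snd e)) \<in> \<theta> \<Longrightarrow>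
           (eval A v (fst (snd q)), eval A v (snd (snd q))) \<in> \<theta>"
  shows "K_congruence ar Qs A \<theta>"
  using assms unfolding K_congruence_def congruence_def by simp

lemma K_congruence_congruence: "K_congruence ar Qs A \<theta> \<Longrightarrow> congruence ar A \<theta>"
  unfolding K_congruence_def by simp

lemma K_congruence_qid:
  "K_congruence ar Qs A \<theta> \<Longrightarrow> q \<in> Qs \<Longrightarrow> range v \<subseteq> carrier A \<Longrightarrow>
    \<forall>e\<in>set (fst q). (eval A v (fst e), eval A v (snd e)) \<in> \<theta> \<Longrightarrow>
    (eval A v (fst (snd q)), eval A v (snd (snd q))) \<in> \<theta>"
  unfolding K_congruence_def by blast

lemma K_congruence_Inter:
  assumes "F \<noteq> {}" and K: "\<And>\<theta>. \<theta> \<in> F \<Longrightarrow> K_congruence ar Qs A \<theta>"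
  shows "K_congruence ar Qs A (\<Inter>F)"
proof -
  have cong: "congruence ar A \<theta>" if "\<theta> \<in> F" for \<theta>
    using K[OF that] by (rule K_congruence_congruence)
  show ?thesis
  proof (rule K_congruenceI)
    have "equiv (carrier A) \<theta>" if "\<theta> \<in> F" for \<theta>
      using cong[OF that] unfolding congruence_def by blast
    then show "equiv (carrier A) (\<Inter>F)"
      using assms(1) unfolding equiv_def refl_on_def sym_def trans_def by (intro conjI) blast+
  next
    fix f xs ys assume l: "length xs = ar f" "length ys = ar f"
      and xys: "list_all2 (\<lambda>x y. (x, y) \<in> \<Inter>F) xs ys"
    show "(oper A f xs, oper A f ys) \<in> \<Inter>F"
    proof
      fix \<theta> assume \<theta>: "\<theta> \<in> F"
      have "list_all2 (\<lambda>x y. (x, y) \<in> \<theta>) xs ys" using xys by (rule list_all2_mono) (use \<theta> in blast)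
      then show "(oper A f xs, oper A f ys) \<in> \<theta>" by (rule congruence_compat[OF cong[OF \<theta>] l])
    qed
  next
    fix q v assume q: "q \<in> Qs" "range v \<subseteq> carrier A"
      and prem: "\<forall>e\<in>set (fst q). (eval A v (fst e), eval A v (snd e)) \<in> \<Inter>F"
    show "(eval A v (fst (snd q)), eval A v (snd (snd q))) \<in> \<Inter>F"
    proof
      fix \<theta> assume "\<theta> \<in> F"
      then show "(eval A v (fst (snd q)), eval A v (snd (snd q))) \<in> \<theta>"
        using K_congruence_qid[OF K[OF \<open>\<theta> \<in> F\<close>] q] prem by blast
    qed
  qed
qed

lemma equiv_Union_chain:
  assumes C: "C \<noteq> {}" "subset.chain \<A> C" and eq: "\<And>\<theta>. \<theta> \<in> C \<Longrightarrow> equiv S \<theta>"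
  shows "equiv S (\<Union>C)"
  unfolding equiv_def refl_on_def sym_def trans_def
proof (intro conjI allI impI ballI)
  show "\<Union>C \<subseteq> S \<times> S" using eq by (auto simp: equiv_def refl_on_def)
  show "(x, x) \<in> \<Union>C" if x: "x \<in> S" for x
  proof -
    obtain \<theta> where "\<theta> \<in> C" using C(1) by blast
    then show ?thesis using eq x by (auto simp: equiv_def refl_on_def)
  qed
  show "(y, x) \<in> \<Union>C" if xy: "(x, y) \<in> \<Union>C" for x y
  proof -
    obtain \<theta> where "\<theta> \<in> C" "(x, y) \<in> \<theta>" using xy by blast
    then show ?thesis using eq by (auto simp: equiv_def dest: symD)
  qed
  fix x y z assume "(x, y) \<in> \<Union>C" "(y, z) \<in> \<Union>C"
  then obtain \<theta> where "\<theta> \<in> C" "(x, y) \<in> \<theta>" "(y, z) \<in> \<theta>"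
    using finite_subset_Union_chain[of "{(x, y), (y, z)}" C, OF _ _ C] by auto
  then show "(x, z) \<in> \<Union>C" using eq by (auto simp: equiv_def dest: transD)
qed

text \<open>The conditions on a relative congruence are finitary, so they pass to unions of chains.\<close>

lemma K_congruence_Union_chain:
  assumes C: "C \<noteq> {}" "subset.chain \<A> C" and K: "\<And>\<theta>. \<theta> \<in> C \<Longrightarrow> K_congruence ar Qs A \<theta>"
  shows "K_congruence ar Qs A (\<Union>C)"
proof -
  have cong: "congruence ar A \<theta>" if "\<theta> \<in> C" for \<theta>
    using K[OF that] by (rule K_congruence_congruence)
  have in_member: "\<exists>\<theta>\<in>C. P \<subseteq> \<theta>" if "finite P" "P \<subseteq> \<Union>C" for P
    using finite_subset_Union_chain[OF that C] by blast
  show ?thesis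
  proof (rule K_congruenceI)
    show "equiv (carrier A) (\<Union>C)"
      using equiv_Union_chain[OF C] cong by (simp add: congruence_def)
  next
    fix f xs ys assume l: "length xs = ar f" "length ys = ar f"
      and "list_all2 (\<lambda>x y. (x, y) \<in> \<Union>C) xs ys"
    then have "set (zip xs ys) \<subseteq> \<Union>C" by (auto simp: list_all2_iff)
    then obtain \<theta> where "\<theta> \<in> C" "set (zip xs ys) \<subseteq> \<theta>" using in_member by blast
    moreover from this have "list_all2 (\<lambda>x y. (x, y) \<in> \<theta>) xs ys"
      using l by (auto simp: list_all2_iff)
    ultimately show "(oper A f xs, oper A f ys) \<in> \<Union>C"
      using congruence_compat[OF cong l] by blast
  next
    fix q v assume q: "q \<in> Qs" "range v \<subseteq> carrier A"
      and prem: "\<forall>e\<in>set (fst q). (eval A v (fst e), eval A v (snd e)) \<in> \<Union>C"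
    let ?P = "(\<lambda>e. (eval A v (fst e), eval A v (snd e))) ` set (fst q)"
    obtain \<theta> where \<theta>: "\<theta> \<in> C" "?P \<subseteq> \<theta>" using in_member[of ?P] prem by auto
    then have "(eval A v (fst (snd q)), eval A v (snd (snd q))) \<in> \<theta>"
      using K_congruence_qid[OF K[OF \<theta>(1)] q] by blast
    then show "(eval A v (fst (snd q)), eval A v (snd (snd q))) \<in> \<Union>C"
      using \<theta>(1) by blast
  qed
qed

lemma lat_join_upper: "a \<union> b \<subseteq> lat_join L a b"
  unfolding lat_join_def by blast

lemma lat_join_least: "c \<in> L \<Longrightarrow> a \<union> b \<subseteq> c \<Longrightarrow> lat_join L a b \<subseteq> c"
  unfolding lat_join_def by blast

definition trivial_alg :: "('f, unit) alg" where
  "trivial_alg = \<lparr>carrier = {()}, oper = (\<lambda>_ _. ())\<rparr>"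

lemma in_qv_trivial_alg: "in_qv ar Qs trivial_alg"
  by (simp add: trivial_alg_def in_qv_def algebra_def closed_set_def sat_qid_def)

locale quasivariety =
  fixes ar :: "'f \<Rightarrow> nat" and Qs :: "'f qid set"
  assumes wf_Qs: "\<forall>q\<in>Qs. wf_qid ar q"
begin

lemma K_congruence_kernel:
  assumes A: "algebra ar A" and h: "hom ar A B h" and B: "in_qv ar Qs B"
  shows "K_congruence ar Qs A (kernel_rel A h)"
  unfolding K_congruence_def
proof (intro conjI ballI allI impI)
  show "congruence ar A (kernel_rel A h)" using A h by (rule congruence_kernel)
  fix q v assume q: "q \<in> Qs" and v: "range v \<subseteq> carrier A"
    and prem: "\<forall>e\<in>set (fst q). (eval A v (fst e), eval A v (snd e)) \<in> kernel_rel A h"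
  have wf: "wf_qid ar q" using wf_Qs q by blast
  have "range (h \<circ> v) \<subseteq> carrier B" using h v by (auto intro: hom_into)
  moreover have "\<forall>e\<in>set (fst q). eval B (h \<circ> v) (fst e) = eval B (h \<circ> v) (snd e)"
    using prem wf hom_eval[OF h A v] by (auto simp: wf_qid_def kernel_rel_def)
  ultimately have "eval B (h \<circ> v) (fst (snd q)) = eval B (h \<circ> v) (snd (snd q))"
    using B q by (auto simp: in_qv_def sat_qid_def)
  then show "(eval A v (fst (snd q)), eval A v (snd (snd q))) \<in> kernel_rel A h"
    using hom_eval[OF h A v] eval_in_carrier[OF A v] wf by (auto simp: wf_qid_def kernel_rel_def)
qed

lemma in_qv_hom_image:
  assumes A: "algebra ar A" and h: "hom ar A B h" and onto: "h ` carrier A = carrier B"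
    and K: "K_congruence ar Qs A (kernel_rel A h)"
  shows "in_qv ar Qs B"
proof -
  have "algebra ar B"
    using A hom_image_closed[OF A h] onto by (auto simp: algebra_def)
  moreover have "sat_qid B q" if q: "q \<in> Qs" for q
    unfolding sat_qid_def
  proof (intro allI impI)
    fix v assume v: "range v \<subseteq> carrier B"
      and prem: "\<forall>e\<in>set (fst q). eval B v (fst e) = eval B v (snd e)"
    define u where "u n = inv_into (carrier A) h (v n)" for n
    have "v n \<in> h ` carrier A" for n using v onto by auto
    then have u: "range u \<subseteq> carrier A" and hu: "h \<circ> u = v"
      by (auto simp: u_def inv_into_into f_inv_into_f)
    have wf: "wf_qid ar q" using wf_Qs q by blast
    have ev: "h (eval A u t) = eval B v t" if "wf_trm ar t" for t
      using hom_eval[OF h A u that] hu by simp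
    have "\<forall>e\<in>set (fst q). (eval A u (fst e), eval A u (snd e)) \<in> kernel_rel A h"
      using prem ev wf eval_in_carrier[OF A u] by (auto simp: wf_qid_def kernel_rel_def)
    then have "(eval A u (fst (snd q)), eval A u (snd (snd q))) \<in> kernel_rel A h"
      by (rule K_congruence_qid[OF K q u])
    then show "eval B v (fst (snd q)) = eval B v (snd (snd q))"
      using ev wf by (auto simp: wf_qid_def kernel_rel_def)
  qed
  ultimately show ?thesis by (simp add: in_qv_def)
qed

lemma K_congruence_Id:
  assumes "in_qv ar Qs A"
  shows "K_congruence ar Qs A (Id_on (carrier A))"
proof -
  have "hom ar A A id" by (simp add: hom_def)
  moreover have "kernel_rel A id = Id_on (carrier A)" by (auto simp: kernel_rel_def)
  ultimately show ?thesis
    using K_congruence_kernel assms by (metis in_qv_def)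
qed

lemma K_congruence_full:
  assumes "algebra ar A"
  shows "K_congruence ar Qs A (carrier A \<times> carrier A)"
proof -
  have "hom ar A trivial_alg (\<lambda>_. ())" by (simp add: hom_def trivial_alg_def)
  moreover have "kernel_rel A (\<lambda>_. ()) = carrier A \<times> carrier A" by (auto simp: kernel_rel_def)
  ultimately show ?thesis
    using K_congruence_kernel[OF assms _ in_qv_trivial_alg] by metis
qed

lemma K_congruence_lat_join:
  assumes "algebra ar A" "K_congruence ar Qs A \<theta>" "K_congruence ar Qs A \<psi>"
  shows "K_congruence ar Qs A (lat_join {\<phi>. K_congruence ar Qs A \<phi>} \<theta> \<psi>)"
  unfolding lat_join_def
proof (rule K_congruence_Inter)
  have "\<theta> \<union> \<psi> \<subseteq> carrier A \<times> carrier A"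
    using assms(2,3) by (blast dest: K_congruence_congruence congruence_subset)
  then show "{\<phi> \<in> {\<phi>. K_congruence ar Qs A \<phi>}. \<theta> \<union> \<psi> \<subseteq> \<phi>} \<noteq> {}"
    using K_congruence_full[OF assms(1)] by blast
qed simp

end

lemma hom_quot:
  assumes c: "congruence ar A \<theta>" and A: "algebra ar A"
  shows "hom ar A (quot A \<theta>) (\<lambda>x. \<theta> `` {x})"
  unfolding hom_def
proof (intro conjI allI impI ballI)
  have eq: "equiv (carrier A) \<theta>" using c by (simp add: congruence_def)
  show "\<theta> `` {x} \<in> carrier (quot A \<theta>)" if "x \<in> carrier A" for x
    using that by (simp add: quot_def quotientI)
  fix f xs assume xs: "length xs = ar f \<and> set xs \<subseteq> carrier A"
  let ?ys = "map (\<lambda>X. SOME x. x \<in> X) (map (\<lambda>x. \<theta> `` {x}) xs)"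
  have "(x, SOME y. y \<in> \<theta> `` {x}) \<in> \<theta>" if "x \<in> carrier A" for x
  proof -
    have "x \<in> \<theta> `` {x}" using eq that by (auto simp: equiv_def refl_on_def)
    then have "(SOME y. y \<in> \<theta> `` {x}) \<in> \<theta> `` {x}" by (rule someI)
    then show ?thesis by simp
  qed
  then have "list_all2 (\<lambda>x y. (x, y) \<in> \<theta>) xs ?ys"
    using xs by (auto simp: list.rel_map list_all2_same)
  then have "(oper A f xs, oper A f ?ys) \<in> \<theta>"
    using c xs by (auto intro: congruence_compat)
  then show "\<theta> `` {oper A f xs} = oper (quot A \<theta>) f (map (\<lambda>x. \<theta> `` {x}) xs)"
    using eq by (simp add: quot_def equiv_class_eq)
qed

lemma kernel_rel_class:
  assumes "equiv (carrier A) \<theta>"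
  shows "kernel_rel A (\<lambda>x. \<theta> `` {x}) = \<theta>"
proof -
  have "\<theta> \<subseteq> carrier A \<times> carrier A" using assms by (simp add: equiv_def refl_on_def)
  then show ?thesis using eq_equiv_class_iff[OF assms] by (auto simp: kernel_rel_def)
qed

text \<open>The hypotheses on \<open>K\<close> only concern algebras whose universe lies in one fixed type, so
  quotients are also modelled inside the type of the algebra, by choosing a representative of
  each class (\<open>quot\<close> instead has the classes themselves as elements).\<close>

definition rep_class :: "('a \<times> 'a) set \<Rightarrow> 'a \<Rightarrow> 'a" where
  "rep_class \<theta> x = (SOME y. (x, y) \<in> \<theta>)"

definition quot_rep :: "('f, 'a) alg \<Rightarrow> ('a \<times> 'a) set \<Rightarrow> ('f, 'a) alg" where
  "quot_rep A \<theta> = \<lparr>carrier = rep_class \<theta> ` carrier A, oper = (\<lambda>f xs. rep_class \<theta> (oper A f xs))\<rparr>"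

lemma rep_class_related:
  assumes "equiv S \<theta>" "x \<in> S"
  shows "(x, rep_class \<theta> x) \<in> \<theta>"
proof -
  have "(x, x) \<in> \<theta>" using assms by (auto simp: equiv_def refl_on_def)
  then show ?thesis unfolding rep_class_def by (rule someI)
qed

lemma rep_class_eq_iff:
  assumes "equiv S \<theta>" "x \<in> S" "y \<in> S"
  shows "rep_class \<theta> x = rep_class \<theta> y \<longleftrightarrow> (x, y) \<in> \<theta>"
proof
  assume "rep_class \<theta> x = rep_class \<theta> y"
  then show "(x, y) \<in> \<theta>"
    using rep_class_related[OF assms(1,2)] rep_class_related[OF assms(1,3)] assms(1)
    unfolding equiv_def by (metis sym_def transE)
next
  assume "(x, y) \<in> \<theta>"
  then have "(x, z) \<in> \<theta> \<longleftrightarrow> (y, z) \<in> \<theta>" for z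
    using assms(1) unfolding equiv_def by (metis sym_def transE)
  then show "rep_class \<theta> x = rep_class \<theta> y" unfolding rep_class_def by simp
qed

lemma kernel_rel_rep_class:
  assumes "equiv (carrier A) \<theta>"
  shows "kernel_rel A (rep_class \<theta>) = \<theta>"
proof -
  have "\<theta> \<subseteq> carrier A \<times> carrier A" using assms by (simp add: equiv_def refl_on_def)
  then show ?thesis using rep_class_eq_iff[OF assms] by (auto simp: kernel_rel_def)
qed

lemma carrier_quot_rep: "carrier (quot_rep A \<theta>) = rep_class \<theta> ` carrier A"
  by (simp add: quot_rep_def)

lemma hom_quot_rep:
  assumes c: "congruence ar A \<theta>" and A: "algebra ar A"
  shows "hom ar A (quot_rep A \<theta>) (rep_class \<theta>)"
  unfolding hom_def
proof (intro conjI allI impI ballI)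
  have eq: "equiv (carrier A) \<theta>" using c by (simp add: congruence_def)
  show "rep_class \<theta> x \<in> carrier (quot_rep A \<theta>)" if "x \<in> carrier A" for x
    using that by (simp add: quot_rep_def)
  fix f xs assume xs: "length xs = ar f \<and> set xs \<subseteq> carrier A"
  let ?ys = "map (rep_class \<theta>) xs"
  have ys: "set ?ys \<subseteq> carrier A" "length ?ys = ar f"
    using xs rep_class_related[OF eq] eq unfolding equiv_def refl_on_def by auto
  have "list_all2 (\<lambda>x y. (x, y) \<in> \<theta>) xs ?ys"
    using xs rep_class_related[OF eq] by (auto simp: list.rel_map list_all2_same)
  then have "(oper A f xs, oper A f ?ys) \<in> \<theta>"
    using congruence_compat[OF c] xs ys(2) by simp
  moreover have "oper A f xs \<in> carrier A" "oper A f ?ys \<in> carrier A"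
    using oper_in_carrier[OF A] xs ys by auto
  ultimately show "rep_class \<theta> (oper A f xs) = oper (quot_rep A \<theta>) f ?ys"
    using rep_class_eq_iff[OF eq] by (simp add: quot_rep_def)
qed

definition factor_map :: "('f, 'a) alg \<Rightarrow> ('a \<Rightarrow> 'b) \<Rightarrow> ('a \<times> 'a) set \<Rightarrow> 'b \<Rightarrow> 'a" where
  "factor_map S k \<theta> = (\<lambda>y. rep_class \<theta> (inv_into (carrier S) k y))"

context
  fixes ar :: "'f \<Rightarrow> nat" and S :: "('f, 'a) alg" and G :: "('f, 'b) alg" and k \<theta>
  assumes S: "algebra ar S" and k: "hom ar S G k" and onto: "k ` carrier S = carrier G"
    and c: "congruence ar S \<theta>" and ker: "kernel_rel S k \<subseteq> \<theta>"
begin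

lemma factor_map_apply:
  assumes s: "s \<in> carrier S"
  shows "factor_map S k \<theta> (k s) = rep_class \<theta> s"
proof -
  have eq: "equiv (carrier S) \<theta>" using c by (simp add: congruence_def)
  let ?s' = "inv_into (carrier S) k (k s)"
  have s': "?s' \<in> carrier S" "k ?s' = k s" using s by (auto intro: inv_into_into f_inv_into_f)
  then have "(?s', s) \<in> \<theta>" using ker s by (auto simp: kernel_rel_def)
  then show ?thesis unfolding factor_map_def using rep_class_eq_iff[OF eq s'(1) s] by blast
qed

lemma factor_map_eq_iff:
  assumes "s \<in> carrier S" "t \<in> carrier S"
  shows "factor_map S k \<theta> (k s) = factor_map S k \<theta> (k t) \<longleftrightarrow> (s, t) \<in> \<theta>"
proof -
  have "equiv (carrier S) \<theta>" using c by (simp add: congruence_def)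
  then show ?thesis using factor_map_apply[OF assms(1)] factor_map_apply[OF assms(2)]
    rep_class_eq_iff[OF _ assms] by simp
qed

lemma factor_map_image: "factor_map S k \<theta> ` carrier G = carrier (quot_rep S \<theta>)"
proof -
  have "factor_map S k \<theta> ` carrier G = (\<lambda>s. factor_map S k \<theta> (k s)) ` carrier S"
    by (simp flip: onto add: image_image)
  also have "\<dots> = rep_class \<theta> ` carrier S" by (rule image_cong[OF refl factor_map_apply])
  finally show ?thesis by (simp add: carrier_quot_rep)
qed

lemma hom_factor_map: "hom ar G (quot_rep S \<theta>) (factor_map S k \<theta>)"
  unfolding hom_def
proof (intro conjI allI impI ballI)
  show "factor_map S k \<theta> y \<in> carrier (quot_rep S \<theta>)" if "y \<in> carrier G" for y
    using that factor_map_image by blast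
  fix f ys assume ys: "length ys = ar f \<and> set ys \<subseteq> carrier G"
  let ?xs = "map (inv_into (carrier S) k) ys"
  have xs: "set ?xs \<subseteq> carrier S" "map k ?xs = ys"
    using ys onto by (auto simp: inv_into_into f_inv_into_f map_idI subset_iff)
  have "k (oper S f ?xs) = oper G f (map k ?xs)" using k ys xs(1) by (simp add: homD)
  then have "factor_map S k \<theta> (oper G f ys) = factor_map S k \<theta> (k (oper S f ?xs))"
    unfolding xs(2) by simp
  also have "\<dots> = rep_class \<theta> (oper S f ?xs)"
    using factor_map_apply oper_in_carrier[OF S] xs(1) ys by simp
  also have "\<dots> = oper (quot_rep S \<theta>) f (map (factor_map S k \<theta>) ys)"
    using homD[OF hom_quot_rep[OF c S]] xs(1) ys by (simp add: factor_map_def comp_def)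
  finally show "factor_map S k \<theta> (oper G f ys) =
      oper (quot_rep S \<theta>) f (map (factor_map S k \<theta>) ys)" .
qed

lemma factor_map_inj_imp_subset_kernel:
  assumes "inj_on (factor_map S k \<theta>) (carrier G)"
  shows "\<theta> \<subseteq> kernel_rel S k"
proof clarify
  fix s t assume st: "(s, t) \<in> \<theta>"
  then have "s \<in> carrier S" "t \<in> carrier S" using congruence_subset[OF c] by auto
  with st have "factor_map S k \<theta> (k s) = factor_map S k \<theta> (k t)" "k s \<in> carrier G" "k t \<in> carrier G"
    using factor_map_eq_iff onto by auto
  then show "(s, t) \<in> kernel_rel S k"
    using assms \<open>s \<in> carrier S\<close> \<open>t \<in> carrier S\<close> by (auto simp: inj_on_def kernel_rel_def)
qed

end

context quasivariety
begin

lemma in_qv_quot_rep: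
  assumes "algebra ar A" "K_congruence ar Qs A \<theta>"
  shows "in_qv ar Qs (quot_rep A \<theta>)"
proof -
  have c: "congruence ar A \<theta>" using assms(2) by (rule K_congruence_congruence)
  then have "kernel_rel A (rep_class \<theta>) = \<theta>"
    by (simp add: congruence_def kernel_rel_rep_class)
  then show ?thesis
    using in_qv_hom_image[OF assms(1) hom_quot_rep[OF c assms(1)] carrier_quot_rep[symmetric]]
      assms(2) by simp
qed

lemma ConK_eq:
  assumes A: "algebra ar A"
  shows "ConK ar Qs A = {\<theta>. K_congruence ar Qs A \<theta>}"
proof (intro set_eqI iffI; simp)
  fix \<theta> assume "\<theta> \<in> ConK ar Qs A"
  then have c: "congruence ar A \<theta>" and "in_qv ar Qs (quot A \<theta>)" by (auto simp: ConK_def)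
  then have "K_congruence ar Qs A (kernel_rel A (\<lambda>x. \<theta> `` {x}))"
    using K_congruence_kernel[OF A hom_quot[OF c A]] by blast
  then show "K_congruence ar Qs A \<theta>"
    using c by (simp add: congruence_def kernel_rel_class)
next
  fix \<theta> assume K: "K_congruence ar Qs A \<theta>"
  then have c: "congruence ar A \<theta>" by (rule K_congruence_congruence)
  have "(\<lambda>x. \<theta> `` {x}) ` carrier A = carrier (quot A \<theta>)"
    by (auto simp: quot_def quotient_def)
  moreover have "kernel_rel A (\<lambda>x. \<theta> `` {x}) = \<theta>"
    using c by (simp add: congruence_def kernel_rel_class)
  ultimately have "in_qv ar Qs (quot A \<theta>)"
    using in_qv_hom_image[OF A hom_quot[OF c A]] K by simp
  then show "\<theta> \<in> ConK ar Qs A" using c by (simp add: ConK_def)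
qed

end

section \<open>Relatively finitely subdirectly irreducible algebras\<close>

context quasivariety
begin

lemma maximal_K_congruence_separating:
  assumes C: "in_qv ar Qs C" and ne: "c1 \<noteq> c2"
  obtains \<phi> where "K_congruence ar Qs C \<phi>" "(c1, c2) \<notin> \<phi>"
    "\<And>\<psi>. K_congruence ar Qs C \<psi> \<Longrightarrow> (c1, c2) \<notin> \<psi> \<Longrightarrow> \<phi> \<subseteq> \<psi> \<Longrightarrow> \<psi> = \<phi>"
proof -
  let ?M = "{\<phi>. K_congruence ar Qs C \<phi> \<and> (c1, c2) \<notin> \<phi>}"
  have "Id_on (carrier C) \<in> ?M" using K_congruence_Id[OF C] ne by auto
  moreover have "\<Union>\<C> \<in> ?M" if "\<C> \<noteq> {}" "subset.chain ?M \<C>" for \<C>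
    using K_congruence_Union_chain[OF that] that(2) by (auto simp: subset_chain_def)
  ultimately obtain \<phi> where "\<phi> \<in> ?M" "\<forall>\<psi>\<in>?M. \<phi> \<subseteq> \<psi> \<longrightarrow> \<psi> = \<phi>"
    using subset_Zorn_nonempty[of ?M] by blast
  then show thesis using that by blast
qed

lemma maximal_K_congruence_collapse:
  assumes C: "in_qv ar Qs C" and K: "K_congruence ar Qs C \<phi>"
    and max: "\<And>\<psi>. K_congruence ar Qs C \<psi> \<Longrightarrow> (c1, c2) \<notin> \<psi> \<Longrightarrow> \<phi> \<subseteq> \<psi> \<Longrightarrow> \<psi> = \<phi>"
    and h: "hom ar (quot_rep C \<phi>) B h" and B: "in_qv ar Qs B"
    and not_inj: "\<not> inj_on h (carrier (quot_rep C \<phi>))"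
  shows "h (rep_class \<phi> c1) = h (rep_class \<phi> c2)"
proof (rule ccontr)
  assume ne: "h (rep_class \<phi> c1) \<noteq> h (rep_class \<phi> c2)"
  let ?\<kappa> = "kernel_rel C (h \<circ> rep_class \<phi>)"
  have algC: "algebra ar C" using C by (simp add: in_qv_def)
  have cong: "congruence ar C \<phi>" using K by (rule K_congruence_congruence)
  then have eq: "equiv (carrier C) \<phi>" by (simp add: congruence_def)
  have "K_congruence ar Qs C ?\<kappa>"
    using K_congruence_kernel[OF algC hom_comp[OF hom_quot_rep[OF cong algC] h] B] .
  moreover have "\<phi> \<subseteq> ?\<kappa>"
  proof clarify
    fix x y assume xy: "(x, y) \<in> \<phi>"
    then have xy': "x \<in> carrier C" "y \<in> carrier C" using congruence_subset[OF cong] by auto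
    then have "rep_class \<phi> x = rep_class \<phi> y" using rep_class_eq_iff[OF eq xy'] xy by blast
    then show "(x, y) \<in> ?\<kappa>" using xy' by (simp add: kernel_rel_def)
  qed
  moreover have "(c1, c2) \<notin> ?\<kappa>" using ne by (simp add: kernel_rel_def)
  ultimately have \<kappa>: "?\<kappa> = \<phi>" using max by blast
  obtain x y where "x \<in> carrier C" "y \<in> carrier C"
    "rep_class \<phi> x \<noteq> rep_class \<phi> y" "h (rep_class \<phi> x) = h (rep_class \<phi> y)"
    using not_inj by (auto simp: inj_on_def carrier_quot_rep)
  then show False using \<kappa> rep_class_eq_iff[OF eq] by (auto simp: kernel_rel_def)
qed

lemma RFSI_quot_rep_maximal:
  assumes C: "in_qv ar Qs C" and c: "c1 \<in> carrier C" "c2 \<in> carrier C"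
    and K: "K_congruence ar Qs C \<phi>" and sep: "(c1, c2) \<notin> \<phi>"
    and max: "\<And>\<psi>. K_congruence ar Qs C \<psi> \<Longrightarrow> (c1, c2) \<notin> \<psi> \<Longrightarrow> \<phi> \<subseteq> \<psi> \<Longrightarrow> \<psi> = \<phi>"
  shows "RFSI ar Qs (quot_rep C \<phi>)"
  unfolding RFSI_def
proof (intro conjI allI impI)
  let ?D = "quot_rep C \<phi>" and ?r = "rep_class \<phi>"
  have algC: "algebra ar C" using C by (simp add: in_qv_def)
  have eq: "equiv (carrier C) \<phi>" using K_congruence_congruence[OF K] by (simp add: congruence_def)
  have sep': "?r c1 \<noteq> ?r c2" and rc: "?r c1 \<in> carrier ?D" "?r c2 \<in> carrier ?D"
    using rep_class_eq_iff[OF eq c] sep c by (simp_all add: carrier_quot_rep)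
  show "in_qv ar Qs ?D" using in_qv_quot_rep[OF algC K] .
  show "nontrivial ?D" using rc sep' by (auto simp: nontrivial_def)
  fix n and B :: "nat \<Rightarrow> ('f, 'a) alg" and h :: "nat \<Rightarrow> 'a \<Rightarrow> 'a"
  assume hyp: "(\<forall>i<n. in_qv ar Qs (B i) \<and> hom ar ?D (B i) (h i) \<and>
      h i ` carrier ?D = carrier (B i)) \<and>
    (\<forall>a\<in>carrier ?D. \<forall>b\<in>carrier ?D. (\<forall>i<n. h i a = h i b) \<longrightarrow> a = b)"
  show "\<exists>i<n. inj_on (h i) (carrier ?D)"
  proof (rule ccontr)
    assume none: "\<not> (\<exists>i<n. inj_on (h i) (carrier ?D))"
    have "h i (?r c1) = h i (?r c2)" if i: "i < n" for i
    proof (rule maximal_K_congruence_collapse[OF C K max])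
      show "hom ar ?D (B i) (h i)" "in_qv ar Qs (B i)" using hyp i by auto
      show "\<not> inj_on (h i) (carrier ?D)" using none i by blast
    qed
    then show False using hyp rc sep' by blast
  qed
qed

lemma RFSI_separating_quotient:
  assumes C: "in_qv ar Qs C" and c: "c1 \<in> carrier C" "c2 \<in> carrier C" "c1 \<noteq> c2"
  obtains \<phi> where "K_congruence ar Qs C \<phi>" "(c1, c2) \<notin> \<phi>" "RFSI ar Qs (quot_rep C \<phi>)"
  using maximal_K_congruence_separating[OF C c(3)] RFSI_quot_rep_maximal[OF C c(1,2)] by metis

lemma RFSI_binary:
  fixes G B1 B2 :: "('f, 'a) alg"
  assumes G: "RFSI ar Qs G" and B: "in_qv ar Qs B1" "in_qv ar Qs B2"
    and h: "hom ar G B1 h1" "hom ar G B2 h2"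
    and onto: "h1 ` carrier G = carrier B1" "h2 ` carrier G = carrier B2"
    and joint: "\<And>a b. a \<in> carrier G \<Longrightarrow> b \<in> carrier G \<Longrightarrow> h1 a = h1 b \<Longrightarrow> h2 a = h2 b \<Longrightarrow> a = b"
  shows "inj_on h1 (carrier G) \<or> inj_on h2 (carrier G)"
proof -
  define B' where "B' i = (if i = (0::nat) then B1 else B2)" for i
  define h' where "h' i = (if i = (0::nat) then h1 else h2)" for i
  have "\<forall>i<2. in_qv ar Qs (B' i) \<and> hom ar G (B' i) (h' i) \<and> h' i ` carrier G = carrier (B' i)"
    using B h onto by (simp add: B'_def h'_def)
  moreover have "\<forall>a\<in>carrier G. \<forall>b\<in>carrier G. (\<forall>i<2. h' i a = h' i b) \<longrightarrow> a = b"
  proof clarify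
    fix a b assume "a \<in> carrier G" "b \<in> carrier G" and "\<forall>i<2. h' i a = h' i b"
    moreover from this have "h' 0 a = h' 0 b" "h' 1 a = h' 1 b" by auto
    ultimately show "a = b" using joint by (simp add: h'_def)
  qed
  ultimately have "\<exists>i<2. inj_on (h' i) (carrier G)"
    using G[unfolded RFSI_def, THEN conjunct2, THEN conjunct2, rule_format, of 2 B' h'] by blast
  then show ?thesis by (auto simp: h'_def less_2_cases_iff)
qed

lemma RFSI_kernel_meet_irreducible:
  fixes S G :: "('f, 'a) alg"
  assumes S: "algebra ar S" and G: "RFSI ar Qs G"
    and k: "hom ar S G k" and onto: "k ` carrier S = carrier G"
    and J: "K_congruence ar Qs S J1" "K_congruence ar Qs S J2"
    and above: "kernel_rel S k \<subseteq> J1" "kernel_rel S k \<subseteq> J2"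
    and meet: "J1 \<inter> J2 \<subseteq> kernel_rel S k"
  shows "J1 \<subseteq> kernel_rel S k \<or> J2 \<subseteq> kernel_rel S k"
proof -
  note c = K_congruence_congruence[OF J(1)] K_congruence_congruence[OF J(2)]
  have "a = b" if ab: "a \<in> carrier G" "b \<in> carrier G"
    and "factor_map S k J1 a = factor_map S k J1 b" and "factor_map S k J2 a = factor_map S k J2 b"
    for a b
  proof -
    obtain s t where st: "s \<in> carrier S" "t \<in> carrier S" "a = k s" "b = k t"
      using ab onto by blast
    then have "(s, t) \<in> J1 \<inter> J2"
      using that factor_map_eq_iff[OF S k onto c(1) above(1)]
        factor_map_eq_iff[OF S k onto c(2) above(2)] by simp
    then show "a = b" using meet st by (auto simp: kernel_rel_def)
  qed
  then have "inj_on (factor_map S k J1) (carrier G) \<or> inj_on (factor_map S k J2) (carrier G)"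
    using RFSI_binary[OF G in_qv_quot_rep[OF S J(1)] in_qv_quot_rep[OF S J(2)]
        hom_factor_map[OF S k onto c(1) above(1)] hom_factor_map[OF S k onto c(2) above(2)]
        factor_map_image[OF S k onto c(1) above(1)] factor_map_image[OF S k onto c(2) above(2)]]
    by blast
  then show ?thesis
    using factor_map_inj_imp_subset_kernel[OF S k onto c(1) above(1)]
      factor_map_inj_imp_subset_kernel[OF S k onto c(2) above(2)] by blast
qed

lemma RFSI_kernel_meet_prime:
  fixes S G :: "('f, 'a) alg"
  assumes CD: "distrib_family (ConK ar Qs S)" and S: "in_qv ar Qs S" and G: "RFSI ar Qs G"
    and k: "hom ar S G k" and onto: "k ` carrier S = carrier G"
    and \<theta>: "K_congruence ar Qs S \<theta>1" "K_congruence ar Qs S \<theta>2"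
    and meet: "\<theta>1 \<inter> \<theta>2 \<subseteq> kernel_rel S k"
  shows "\<theta>1 \<subseteq> kernel_rel S k \<or> \<theta>2 \<subseteq> kernel_rel S k"
proof -
  let ?L = "{\<theta>. K_congruence ar Qs S \<theta>}" and ?\<kappa> = "kernel_rel S k"
  have algS: "algebra ar S" using S by (simp add: in_qv_def)
  have dist: "x \<inter> lat_join ?L y z = lat_join ?L (x \<inter> y) (x \<inter> z)"
    if "K_congruence ar Qs S x" "K_congruence ar Qs S y" "K_congruence ar Qs S z" for x y z
  proof -
    have "distrib_family ?L" using CD by (simp only: ConK_eq[OF algS])
    then show ?thesis using that unfolding distrib_family_def by blast
  qed
  have K\<kappa>: "K_congruence ar Qs S ?\<kappa>"
    using K_congruence_kernel[OF algS k] G by (simp add: RFSI_def)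
  define J1 where "J1 = lat_join ?L ?\<kappa> \<theta>1"
  define J2 where "J2 = lat_join ?L ?\<kappa> \<theta>2"
  have KJ: "K_congruence ar Qs S J1" "K_congruence ar Qs S J2"
    unfolding J1_def J2_def by (rule K_congruence_lat_join[OF algS K\<kappa> \<theta>(1)],
      rule K_congruence_lat_join[OF algS K\<kappa> \<theta>(2)])
  have "?\<kappa> \<union> \<theta>1 \<subseteq> J1" "?\<kappa> \<union> \<theta>2 \<subseteq> J2"
    unfolding J1_def J2_def by (rule lat_join_upper)+
  then have upper: "?\<kappa> \<subseteq> J1" "\<theta>1 \<subseteq> J1" "?\<kappa> \<subseteq> J2" "\<theta>2 \<subseteq> J2" by auto
  have "\<theta>2 \<inter> J1 = lat_join ?L (\<theta>2 \<inter> ?\<kappa>) (\<theta>2 \<inter> \<theta>1)"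
    unfolding J1_def by (rule dist[OF \<theta>(2) K\<kappa> \<theta>(1)])
  also have "\<dots> \<subseteq> ?\<kappa>" using K\<kappa> meet by (intro lat_join_least) auto
  finally have "\<theta>2 \<inter> J1 \<subseteq> ?\<kappa>" .
  have "J1 \<inter> J2 = lat_join ?L (J1 \<inter> ?\<kappa>) (J1 \<inter> \<theta>2)"
    unfolding J2_def by (rule dist[OF KJ(1) K\<kappa> \<theta>(2)])
  also have "\<dots> \<subseteq> ?\<kappa>" using K\<kappa> \<open>\<theta>2 \<inter> J1 \<subseteq> ?\<kappa>\<close> by (intro lat_join_least) auto
  finally have "J1 \<inter> J2 \<subseteq> ?\<kappa>" .
  then have "J1 \<subseteq> ?\<kappa> \<or> J2 \<subseteq> ?\<kappa>"
    using RFSI_kernel_meet_irreducible[OF algS G k onto KJ] upper by blast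
  then show ?thesis using upper by blast
qed

lemma RFSI_kernel_meet_prime_Inter:
  fixes S G :: "('f, 'a) alg"
  assumes CD: "distrib_family (ConK ar Qs S)" and S: "in_qv ar Qs S" and G: "RFSI ar Qs G"
    and k: "hom ar S G k" and onto: "k ` carrier S = carrier G"
    and \<Theta>: "finite \<Theta>" "\<Theta> \<noteq> {}" "\<And>\<theta>. \<theta> \<in> \<Theta> \<Longrightarrow> K_congruence ar Qs S \<theta>"
    and meet: "\<Inter>\<Theta> \<subseteq> kernel_rel S k"
  shows "\<exists>\<theta>\<in>\<Theta>. \<theta> \<subseteq> kernel_rel S k"
  using \<Theta> meet
proof (induction \<Theta> rule: finite_ne_induct)
  case (insert \<theta> \<Theta>)
  have "K_congruence ar Qs S (\<Inter>\<Theta>)"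
    using insert.prems insert.hyps(2) by (intro K_congruence_Inter) auto
  moreover have "\<theta> \<inter> \<Inter>\<Theta> \<subseteq> kernel_rel S k" using insert.prems(2) by simp
  ultimately have "\<theta> \<subseteq> kernel_rel S k \<or> \<Inter>\<Theta> \<subseteq> kernel_rel S k"
    using RFSI_kernel_meet_prime[OF CD S G k onto insert.prems(1)[OF insertI1]] by blast
  then show ?case using insert.IH insert.prems by blast
qed simp

end

section \<open>Term algebras modulo families of identities\<close>

definition term_congruence :: "('f trm \<Rightarrow> 'f trm \<Rightarrow> bool) \<Rightarrow> bool" where
  "term_congruence R = ((\<forall>t. R t t) \<and> (\<forall>s t. R s t \<longrightarrow> R t s) \<and> (\<forall>s t u. R s t \<longrightarrow> R t u \<longrightarrow> R s u)
     \<and> (\<forall>f ss ts. list_all2 R ss ts \<longrightarrow> R (Op f ss) (Op f ts)))"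

lemma term_congruence_refl: "term_congruence R \<Longrightarrow> R t t"
  unfolding term_congruence_def by blast

lemma term_congruence_sym: "term_congruence R \<Longrightarrow> R s t \<Longrightarrow> R t s"
  unfolding term_congruence_def by blast

lemma term_congruence_trans: "term_congruence R \<Longrightarrow> R s t \<Longrightarrow> R t u \<Longrightarrow> R s u"
  unfolding term_congruence_def by blast

lemma term_congruence_Op: "term_congruence R \<Longrightarrow> list_all2 R ss ts \<Longrightarrow> R (Op f ss) (Op f ts)"
  unfolding term_congruence_def by blast

text \<open>Quotients of the term algebra are modelled in the type \<open>'a\<close> through an injection of the
  terms into \<open>'a\<close>, as provided by the hypothesis \<open>\<exists>e. inj e\<close> of the theorem.\<close>

locale term_encoding = quasivariety ar Qs for ar :: "'f \<Rightarrow> nat" and Qs :: "'f qid set" +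
  fixes e :: "'f trm \<Rightarrow> 'a"
  assumes inj_e: "inj e"
begin

definition K_eq :: "'f trm \<Rightarrow> 'f trm \<Rightarrow> bool" where
  "K_eq s t = (\<forall>A :: ('f, 'a) alg. in_qv ar Qs A \<longrightarrow> sat_qid A ([], (s, t)))"

lemma K_eq_iff:
  "K_eq s t \<longleftrightarrow>
    (\<forall>(A :: ('f, 'a) alg) v. in_qv ar Qs A \<and> range v \<subseteq> carrier A \<longrightarrow> eval A v s = eval A v t)"
  unfolding K_eq_def sat_qid_def by auto

definition inst_eq :: "(nat \<Rightarrow> 'f trm) set \<Rightarrow> 'f trm \<Rightarrow> 'f trm \<Rightarrow> bool" where
  "inst_eq \<Sigma> s t = (\<forall>\<sigma>\<in>\<Sigma>. K_eq (subst \<sigma> s) (subst \<sigma> t))"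

lemma term_congruence_inst_eq: "term_congruence (inst_eq \<Sigma>)"
  unfolding term_congruence_def
proof (intro conjI allI impI)
  fix f ss ts assume "list_all2 (inst_eq \<Sigma>) ss ts"
  then have "list_all2 (\<lambda>x y. eval A v (subst \<sigma> x) = eval A v (subst \<sigma> y)) ss ts"
    if "\<sigma> \<in> \<Sigma>" "in_qv ar Qs A" "range v \<subseteq> carrier A" for \<sigma> and A :: "('f, 'a) alg" and v
    using that by (auto simp: inst_eq_def K_eq_iff elim!: list_all2_mono)
  then have "map (eval A v \<circ> subst \<sigma>) ss = map (eval A v \<circ> subst \<sigma>) ts"
    if "\<sigma> \<in> \<Sigma>" "in_qv ar Qs A" "range v \<subseteq> carrier A" for \<sigma> and A :: "('f, 'a) alg" and v
    using that by (auto simp: list_all2_conv_all_nth intro: nth_equalityI)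
  then show "inst_eq \<Sigma> (Op f ss) (Op f ts)"
    unfolding inst_eq_def K_eq_iff by simp
qed (auto simp: inst_eq_def K_eq_iff)

lemma inst_eq_singleton: "\<sigma> \<in> \<Sigma> \<Longrightarrow> inst_eq \<Sigma> s t \<Longrightarrow> inst_eq {\<sigma>} s t"
  unfolding inst_eq_def by blast

definition term_rep :: "('f trm \<Rightarrow> 'f trm \<Rightarrow> bool) \<Rightarrow> 'f trm \<Rightarrow> 'f trm" where
  "term_rep R t = (SOME s. wf_trm ar s \<and> R t s)"

definition term_alg :: "('f trm \<Rightarrow> 'f trm \<Rightarrow> bool) \<Rightarrow> ('f, 'a) alg" where
  "term_alg R = \<lparr>carrier = (\<lambda>t. e (term_rep R t)) ` {t. wf_trm ar t},
     oper = (\<lambda>f xs. e (term_rep R (Op f (map (inv e) xs))))\<rparr>"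

lemma term_rep:
  assumes "term_congruence R" "wf_trm ar t"
  shows "wf_trm ar (term_rep R t)" "R t (term_rep R t)"
proof -
  have "\<exists>s. wf_trm ar s \<and> R t s" using assms term_congruence_refl by blast
  then have "wf_trm ar (term_rep R t) \<and> R t (term_rep R t)"
    unfolding term_rep_def by (rule someI_ex)
  then show "wf_trm ar (term_rep R t)" "R t (term_rep R t)" by auto
qed

lemma term_rep_eq_iff:
  assumes R: "term_congruence R" and s: "wf_trm ar s" and t: "wf_trm ar t"
  shows "e (term_rep R s) = e (term_rep R t) \<longleftrightarrow> R s t"
proof
  assume "e (term_rep R s) = e (term_rep R t)"
  then have "term_rep R s = term_rep R t" using inj_e by (simp add: inj_eq)
  then show "R s t"
    using term_rep(2)[OF R s] term_rep(2)[OF R t]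
      term_congruence_sym[OF R] term_congruence_trans[OF R] by metis
next
  assume "R s t"
  then have "(wf_trm ar u \<and> R s u) = (wf_trm ar u \<and> R t u)" for u
    using term_congruence_sym[OF R] term_congruence_trans[OF R] by blast
  then show "e (term_rep R s) = e (term_rep R t)" unfolding term_rep_def by simp
qed

lemma term_alg_carrier:
  assumes R: "term_congruence R" and x: "x \<in> carrier (term_alg R)"
  shows "wf_trm ar (inv e x)" "x = e (term_rep R (inv e x))"
proof -
  obtain t where t: "wf_trm ar t" "x = e (term_rep R t)" using x by (auto simp: term_alg_def)
  then have "inv e x = term_rep R t" using inj_e by simp
  moreover have "R (term_rep R t) t"
    using term_rep[OF R t(1)] by (blast intro: term_congruence_sym[OF R])
  ultimately show "wf_trm ar (inv e x)" "x = e (term_rep R (inv e x))"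
    using t term_rep[OF R t(1)] term_rep_eq_iff[OF R] by auto
qed

lemma eval_term_alg:
  assumes R: "term_congruence R" and \<tau>: "\<And>n. wf_trm ar (\<tau> n)"
  shows "wf_trm ar t \<Longrightarrow> eval (term_alg R) (\<lambda>n. e (term_rep R (\<tau> n))) t = e (term_rep R (subst \<tau> t))"
proof (induction t)
  case (Op f ts)
  let ?us = "map (\<lambda>t. term_rep R (subst \<tau> t)) ts"
  have wf: "wf_trm ar (subst \<tau> t)" if "t \<in> set ts" for t
    using Op.prems that by (auto intro!: wf_subst \<tau>)
  have "eval (term_alg R) (\<lambda>n. e (term_rep R (\<tau> n))) (Op f ts) = e (term_rep R (Op f ?us))"
    using Op inj_e by (simp add: term_alg_def comp_def cong: map_cong)
  also have "\<dots> = e (term_rep R (subst \<tau> (Op f ts)))"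
  proof (rule term_rep_eq_iff[OF R, THEN iffD2])
    show "wf_trm ar (Op f ?us)" "wf_trm ar (subst \<tau> (Op f ts))"
      using wf term_rep(1)[OF R] Op.prems by auto
    have "list_all2 R ?us (map (subst \<tau>) ts)"
      using wf term_rep(2)[OF R] term_congruence_sym[OF R]
      by (auto simp: list.rel_map list_all2_same)
    then show "R (Op f ?us) (subst \<tau> (Op f ts))"
      using term_congruence_Op[OF R] by simp
  qed
  finally show ?case .
qed simp

lemma eval_term_alg_inv:
  assumes R: "term_congruence R" and v: "range v \<subseteq> carrier (term_alg R)" and t: "wf_trm ar t"
  shows "eval (term_alg R) v t = e (term_rep R (subst (\<lambda>n. inv e (v n)) t))"
proof -
  have vn: "v n \<in> carrier (term_alg R)" for n using v by auto
  have "eval (term_alg R) (\<lambda>n. e (term_rep R (inv e (v n)))) t =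
      e (term_rep R (subst (\<lambda>n. inv e (v n)) t))"
    using eval_term_alg[OF R term_alg_carrier(1)[OF R vn] t] .
  moreover have "(\<lambda>n. e (term_rep R (inv e (v n)))) = v"
    using term_alg_carrier(2)[OF R vn] by auto
  ultimately show ?thesis by simp
qed

lemma algebra_term_alg: "term_congruence R \<Longrightarrow> algebra ar (term_alg R)"
  unfolding algebra_def closed_set_def
proof (intro conjI allI impI)
  show "carrier (term_alg R) \<noteq> {}" by (auto simp: term_alg_def intro!: exI[where x="Var 0"])
  fix f xs assume R: "term_congruence R" and xs: "length xs = ar f \<and> set xs \<subseteq> carrier (term_alg R)"
  then have "wf_trm ar (Op f (map (inv e) xs))" using term_alg_carrier(1)[OF R] by auto
  then show "oper (term_alg R) f xs \<in> carrier (term_alg R)" by (auto simp: term_alg_def)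
qed

lemma inst_eq_qid:
  assumes \<Sigma>: "\<forall>\<sigma>\<in>\<Sigma>. \<forall>n. wf_trm ar (\<sigma> n)" and \<tau>: "\<forall>n. wf_trm ar (\<tau> n)" and q: "q \<in> Qs"
    and prem: "\<forall>e\<in>set (fst q). inst_eq \<Sigma> (subst \<tau> (fst e)) (subst \<tau> (snd e))"
  shows "inst_eq \<Sigma> (subst \<tau> (fst (snd q))) (subst \<tau> (snd (snd q)))"
  unfolding inst_eq_def K_eq_iff
proof (intro ballI allI impI)
  fix \<sigma> and A :: "('f, 'a) alg" and w :: "nat \<Rightarrow> 'a"
  assume \<sigma>: "\<sigma> \<in> \<Sigma>" and Aw: "in_qv ar Qs A \<and> range w \<subseteq> carrier A"
  define w' where "w' n = eval A w (subst \<sigma> (\<tau> n))" for n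
  have "wf_trm ar (subst \<sigma> (\<tau> n))" for n using \<tau> \<Sigma> \<sigma> by (simp add: wf_subst)
  then have w': "range w' \<subseteq> carrier A" unfolding w'_def
    using Aw eval_in_carrier[of ar A w] by (auto simp: in_qv_def)
  have sub: "eval A w (subst \<sigma> (subst \<tau> t)) = eval A w' t" for t
    unfolding subst_subst w'_def by (rule eval_subst)
  have "\<forall>e\<in>set (fst q). eval A w' (fst e) = eval A w' (snd e)"
    using prem \<sigma> Aw by (auto simp: inst_eq_def K_eq_iff sub[symmetric])
  then have "eval A w' (fst (snd q)) = eval A w' (snd (snd q))"
    using Aw q w' by (auto simp: in_qv_def sat_qid_def)
  then show "eval A w (subst \<sigma> (subst \<tau> (fst (snd q)))) =
      eval A w (subst \<sigma> (subst \<tau> (snd (snd q))))"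
    by (simp add: sub)
qed

lemma in_qv_term_alg:
  assumes \<Sigma>: "\<And>\<sigma> n. \<sigma> \<in> \<Sigma> \<Longrightarrow> wf_trm ar (\<sigma> n)"
  shows "in_qv ar Qs (term_alg (inst_eq \<Sigma>))"
  unfolding in_qv_def
proof (intro conjI ballI)
  let ?R = "inst_eq \<Sigma>"
  have R: "term_congruence ?R" by (rule term_congruence_inst_eq)
  show "algebra ar (term_alg ?R)" using algebra_term_alg[OF R] .
  fix q assume q: "q \<in> Qs"
  have wq: "wf_qid ar q" using wf_Qs q by blast
  show "sat_qid (term_alg ?R) q"
    unfolding sat_qid_def
  proof (intro allI impI)
    fix v assume v: "range v \<subseteq> carrier (term_alg ?R)"
      and prem: "\<forall>e\<in>set (fst q). eval (term_alg ?R) v (fst e) = eval (term_alg ?R) v (snd e)"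
    define \<tau> where "\<tau> n = inv e (v n)" for n
    have \<tau>: "wf_trm ar (\<tau> n)" for n using term_alg_carrier(1)[OF R] v by (auto simp: \<tau>_def)
    have ev: "eval (term_alg ?R) v t = e (term_rep ?R (subst \<tau> t))" if "wf_trm ar t" for t
      unfolding \<tau>_def by (rule eval_term_alg_inv[OF R v that])
    have ev_eq: "eval (term_alg ?R) v s = eval (term_alg ?R) v t \<longleftrightarrow> ?R (subst \<tau> s) (subst \<tau> t)"
      if "wf_trm ar s" "wf_trm ar t" for s t
      using that ev term_rep_eq_iff[OF R] wf_subst[OF _ \<tau>] by simp
    have "\<forall>e\<in>set (fst q). ?R (subst \<tau> (fst e)) (subst \<tau> (snd e))"
      using prem ev_eq wq by (auto simp: wf_qid_def)
    then have "?R (subst \<tau> (fst (snd q))) (subst \<tau> (snd (snd q)))"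
      using \<Sigma> \<tau> by (intro inst_eq_qid[OF _ _ q]) auto
    then show "eval (term_alg ?R) v (fst (snd q)) = eval (term_alg ?R) v (snd (snd q))"
      using ev_eq wq by (simp add: wf_qid_def)
  qed
qed

definition term_alg_map :: "('f trm \<Rightarrow> 'f trm \<Rightarrow> bool) \<Rightarrow> 'a \<Rightarrow> 'a" where
  "term_alg_map R' u = e (term_rep R' (inv e u))"

lemma term_alg_map_term_rep:
  assumes R: "term_congruence R" and R': "term_congruence R'" and le: "\<And>s t. R s t \<Longrightarrow> R' s t"
    and s: "wf_trm ar s"
  shows "term_alg_map R' (e (term_rep R s)) = e (term_rep R' s)"
proof -
  have "R' (term_rep R s) s" using term_rep(2)[OF R s] le term_congruence_sym[OF R'] by blast
  then show ?thesis
    unfolding term_alg_map_def using inj_e term_rep(1)[OF R s] term_rep_eq_iff[OF R' _ s] by simp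
qed

lemma hom_term_alg_map:
  assumes R: "term_congruence R" and R': "term_congruence R'" and le: "\<And>s t. R s t \<Longrightarrow> R' s t"
  shows "hom ar (term_alg R) (term_alg R') (term_alg_map R')"
  unfolding hom_def
proof (intro conjI allI impI ballI)
  fix x assume "x \<in> carrier (term_alg R)"
  then obtain t where "wf_trm ar t" "x = e (term_rep R t)" by (auto simp: term_alg_def)
  then show "term_alg_map R' x \<in> carrier (term_alg R')"
    using term_alg_map_term_rep[OF R R' le] by (auto simp: term_alg_def)
next
  fix f xs assume xs: "length xs = ar f \<and> set xs \<subseteq> carrier (term_alg R)"
  let ?ts = "map (inv e) xs"
  have wf: "\<forall>t\<in>set ?ts. wf_trm ar t" using xs term_alg_carrier(1)[OF R] by auto
  have "oper (term_alg R') f (map (term_alg_map R') xs) =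
      e (term_rep R' (Op f (map (term_rep R') ?ts)))"
    using inj_e by (simp add: term_alg_def term_alg_map_def comp_def)
  also have "\<dots> = e (term_rep R' (Op f ?ts))"
  proof (rule term_rep_eq_iff[OF R', THEN iffD2])
    show "wf_trm ar (Op f (map (term_rep R') ?ts))" "wf_trm ar (Op f ?ts)"
      using wf xs term_rep(1)[OF R'] by auto
    show "R' (Op f (map (term_rep R') ?ts)) (Op f ?ts)"
      using wf term_rep(2)[OF R'] term_congruence_sym[OF R']
      by (auto simp: list.rel_map list_all2_same intro!: term_congruence_Op[OF R'])
  qed
  also have "\<dots> = term_alg_map R' (oper (term_alg R) f xs)"
    using term_alg_map_term_rep[OF R R' le] wf xs by (simp add: term_alg_def)
  finally show "term_alg_map R' (oper (term_alg R) f xs) =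
      oper (term_alg R') f (map (term_alg_map R') xs)" ..
qed

end

section \<open>The algebra witnessing a Pixley term\<close>

definition subst4 :: "'f trm \<Rightarrow> 'f trm \<Rightarrow> 'f trm \<Rightarrow> 'f trm \<Rightarrow> nat \<Rightarrow> 'f trm" where
  "subst4 a b c d n = (if n = 0 then a else if n = 1 then b else if n = 2 then c else d)"

lemma subst4_min3: "subst4 a b c d (min n 3) = subst4 a b c d n"
  by (simp add: subst4_def min_def)

lemma subst4_min2: "subst4 a b c d (min n 2) = subst4 a b c c n"
  by (simp add: subst4_def min_def)

text \<open>Substituting \<open>x\<^sub>0, x\<^sub>1, x\<^sub>2, x\<^sub>3\<close> by one of these gives an instance of a Pixley identity
  \<open>p(x, y, y) = x\<close>, \<open>p(x, y, x) = x\<close>, \<open>p(y, y, x) = x\<close>, with \<open>x\<^sub>3\<close> in the role of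
  \<open>p(x\<^sub>0, x\<^sub>1, x\<^sub>2)\<close>.\<close>

definition pixley_substs :: "(nat \<Rightarrow> 'f trm) set" where
  "pixley_substs = {subst4 (Var 0) (Var 1) (Var 1) (Var 0), subst4 (Var 0) (Var 1) (Var 0) (Var 0),
     subst4 (Var 1) (Var 1) (Var 0) (Var 0)}"

lemma pixley_substs_wf: "\<sigma> \<in> pixley_substs \<Longrightarrow> wf_trm ar (\<sigma> n)"
  by (auto simp: pixley_substs_def subst4_def)

lemma pixley_substs_min3: "\<sigma> \<in> pixley_substs \<Longrightarrow> \<sigma> (min n 3) = \<sigma> n"
  by (auto simp: pixley_substs_def subst4_min3)

lemma pixley_substs_3: "\<sigma> \<in> pixley_substs \<Longrightarrow> \<sigma> 3 = Var 0"
  by (auto simp: pixley_substs_def subst4_def)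

locale pixley_construction = term_encoding ar Qs e
  for ar :: "'f \<Rightarrow> nat" and Qs :: "'f qid set" and e :: "'f trm \<Rightarrow> 'a" +
  assumes rel_CD: "rel_CD ar Qs TYPE('a)"
    and RFSI_sub: "RFSI_sub_closed ar Qs TYPE('a)"
begin

definition F :: "('f, 'a) alg" where
  "F = term_alg (inst_eq pixley_substs)"

definition gen :: "nat \<Rightarrow> 'a" where
  "gen n = e (term_rep (inst_eq pixley_substs) (Var n))"

definition inst_kernel :: "(nat \<Rightarrow> 'f trm) \<Rightarrow> ('a \<times> 'a) set" where
  "inst_kernel \<sigma> = kernel_rel F (term_alg_map (inst_eq {\<sigma>}))"

lemma in_qv_F: "in_qv ar Qs F"
  unfolding F_def using in_qv_term_alg pixley_substs_wf by blast

lemma algebra_F: "algebra ar F"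
  using in_qv_F by (simp add: in_qv_def)

lemma gen_in_F: "gen n \<in> carrier F"
  by (auto simp: gen_def F_def term_alg_def)

lemma term_alg_map_F:
  "\<sigma> \<in> pixley_substs \<Longrightarrow> wf_trm ar s \<Longrightarrow>
    term_alg_map (inst_eq {\<sigma>}) (e (term_rep (inst_eq pixley_substs) s)) = e (term_rep (inst_eq {\<sigma>}) s)"
  by (rule term_alg_map_term_rep[OF term_congruence_inst_eq term_congruence_inst_eq
        inst_eq_singleton[of _ pixley_substs]])

lemma K_congruence_inst_kernel: "\<sigma> \<in> pixley_substs \<Longrightarrow> K_congruence ar Qs F (inst_kernel \<sigma>)"
  unfolding inst_kernel_def F_def
  using K_congruence_kernel[OF algebra_F[unfolded F_def]
      hom_term_alg_map[OF term_congruence_inst_eq term_congruence_inst_eq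
        inst_eq_singleton[of _ pixley_substs]]
      in_qv_term_alg[of "{\<sigma>}"]] pixley_substs_wf
  by blast

lemma gen_inst_kernel:
  assumes \<sigma>: "\<sigma> \<in> pixley_substs" and eq: "\<sigma> a = \<sigma> b"
  shows "(gen a, gen b) \<in> inst_kernel \<sigma>"
proof -
  have "inst_eq {\<sigma>} (Var a) (Var b)" using eq by (simp add: inst_eq_def K_eq_iff)
  then have "e (term_rep (inst_eq {\<sigma>}) (Var a)) = e (term_rep (inst_eq {\<sigma>}) (Var b))"
    using term_rep_eq_iff[OF term_congruence_inst_eq] by simp
  then show ?thesis
    using gen_in_F term_alg_map_F[OF \<sigma>] by (simp add: inst_kernel_def kernel_rel_def gen_def)
qed

lemma inst_kernels_separate:
  assumes uv: "\<forall>\<sigma>\<in>pixley_substs. (u, v) \<in> inst_kernel \<sigma>"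
  shows "u = v"
proof -
  have "u \<in> carrier F" "v \<in> carrier F"
    using uv by (auto simp: pixley_substs_def inst_kernel_def kernel_rel_def)
  then obtain s t where st: "wf_trm ar s" "u = e (term_rep (inst_eq pixley_substs) s)"
    "wf_trm ar t" "v = e (term_rep (inst_eq pixley_substs) t)"
    by (auto simp: F_def term_alg_def)
  have "inst_eq {\<sigma>} s t" if \<sigma>: "\<sigma> \<in> pixley_substs" for \<sigma>
  proof -
    have "term_alg_map (inst_eq {\<sigma>}) u = term_alg_map (inst_eq {\<sigma>}) v"
      using uv \<sigma> by (auto simp: inst_kernel_def kernel_rel_def)
    then show ?thesis
      using st term_alg_map_F[OF \<sigma>] term_rep_eq_iff[OF term_congruence_inst_eq] by simp
  qed
  then have "inst_eq pixley_substs s t" by (auto simp: inst_eq_def)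
  then show "u = v" using st term_rep_eq_iff[OF term_congruence_inst_eq] by simp
qed

lemma Sg_gen_F: "Sg ar F {gen 0, gen 1, gen 2, gen 3} = carrier F"
proof
  let ?X = "{gen 0, gen 1, gen 2, gen 3}"
  have X: "?X \<subseteq> carrier F" using gen_in_F by auto
  show "Sg ar F ?X \<subseteq> carrier F" by (rule Sg_subset_carrier[OF algebra_F X])
  show "carrier F \<subseteq> Sg ar F ?X"
  proof
    fix x assume "x \<in> carrier F"
    then obtain s where s: "wf_trm ar s" "x = e (term_rep (inst_eq pixley_substs) s)"
      by (auto simp: F_def term_alg_def)
    define \<rho> :: "nat \<Rightarrow> 'f trm" where "\<rho> n = Var (min n 3)" for n
    have "subst \<sigma> s = subst \<sigma> (subst \<rho> s)" if "\<sigma> \<in> pixley_substs" for \<sigma>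
      using pixley_substs_min3[OF that] by (simp add: subst_subst \<rho>_def)
    then have "inst_eq pixley_substs s (subst \<rho> s)" by (simp add: inst_eq_def K_eq_iff)
    moreover have "wf_trm ar (subst \<rho> s)" using s(1) by (rule wf_subst) (simp add: \<rho>_def)
    ultimately have "x = e (term_rep (inst_eq pixley_substs) (subst \<rho> s))"
      using s term_rep_eq_iff[OF term_congruence_inst_eq] by blast
    also have "\<dots> = eval F (\<lambda>n. gen (min n 3)) s"
      using eval_term_alg[OF term_congruence_inst_eq _ s(1), of \<rho>]
      unfolding F_def gen_def \<rho>_def by simp
    also have "\<dots> \<in> Sg ar F ?X"
    proof (rule eval_in_closed_set[OF closed_set_Sg _ s(1)])
      have "gen (min n 3) \<in> ?X" for n
      proof -
        have "min n 3 = 0 \<or> min n 3 = 1 \<or> min n 3 = 2 \<or> min n 3 = (3::nat)"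
          unfolding min_def by presburger
        then show ?thesis by (elim disjE) simp_all
      qed
      then show "range (\<lambda>n. gen (min n 3)) \<subseteq> Sg ar F ?X" using Sg_upper[of ?X ar F] by blast
    qed
    finally show "x \<in> Sg ar F ?X" .
  qed
qed

lemma RFSI_hom_kernel_inst_kernel:
  fixes D :: "('f, 'a) alg"
  assumes D: "RFSI ar Qs D" and k: "hom ar F D k"
    and nontriv: "\<exists>a\<in>carrier F. \<exists>b\<in>carrier F. k a \<noteq> k b"
  shows "\<exists>\<sigma>\<in>pixley_substs. inst_kernel \<sigma> \<subseteq> kernel_rel F k"
proof -
  let ?G = "D\<lparr>carrier := k ` carrier F\<rparr>"
  have "subuniverse ar D (k ` carrier F)"
    unfolding subuniverse_def
    using hom_into[OF k] gen_in_F hom_image_closed[OF algebra_F k] by blast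
  then have G: "RFSI ar Qs ?G"
    using RFSI_sub D nontriv unfolding RFSI_sub_closed_def by blast
  have kG: "hom ar F ?G k" using k by (simp add: hom_def)
  have CD: "distrib_family (ConK ar Qs F)" using rel_CD in_qv_F by (simp add: rel_CD_def)
  have "\<Inter>(inst_kernel ` pixley_substs) \<subseteq> kernel_rel F k"
  proof (rule subsetI, clarify)
    fix u v assume "(u, v) \<in> \<Inter>(inst_kernel ` pixley_substs)"
    then have uv: "\<forall>\<sigma>\<in>pixley_substs. (u, v) \<in> inst_kernel \<sigma>" by blast
    then have "u \<in> carrier F" by (auto simp: pixley_substs_def inst_kernel_def kernel_rel_def)
    moreover have "u = v" using uv by (rule inst_kernels_separate)
    ultimately show "(u, v) \<in> kernel_rel F k" by (simp add: kernel_rel_def)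
  qed
  moreover have "finite (inst_kernel ` pixley_substs)" "inst_kernel ` pixley_substs \<noteq> {}"
    by (simp_all add: pixley_substs_def)
  moreover have "K_congruence ar Qs F \<theta>" if "\<theta> \<in> inst_kernel ` pixley_substs" for \<theta>
    using that K_congruence_inst_kernel by blast
  ultimately have "\<exists>\<theta>\<in>inst_kernel ` pixley_substs. \<theta> \<subseteq> kernel_rel F k"
    using RFSI_kernel_meet_prime_Inter[OF CD in_qv_F G kG, of "inst_kernel ` pixley_substs"] by simp
  then show ?thesis by blast
qed

lemma RFSI_hom_gen3:
  fixes D :: "('f, 'a) alg"
  assumes D: "RFSI ar Qs D" and k: "hom ar F D k"
  shows "k (gen 3) = (if k (gen 0) = k (gen 1) then k (gen 2) else k (gen 0))"
proof (cases "\<exists>a\<in>carrier F. \<exists>b\<in>carrier F. k a \<noteq> k b")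
  case False
  then have "k (gen i) = k (gen 0)" for i using gen_in_F by blast
  from this[of 1] this[of 2] this[of 3] show ?thesis by simp
next
  case True
  then obtain \<sigma> where \<sigma>: "\<sigma> \<in> pixley_substs" "inst_kernel \<sigma> \<subseteq> kernel_rel F k"
    using RFSI_hom_kernel_inst_kernel[OF D k] by blast
  have same: "k (gen a) = k (gen b)" if "\<sigma> a = \<sigma> b" for a b
    using gen_inst_kernel[OF \<sigma>(1) that] \<sigma>(2) by (auto simp: kernel_rel_def)
  from \<sigma>(1) consider "\<sigma> = subst4 (Var 0) (Var 1) (Var 1) (Var 0)"
    | "\<sigma> = subst4 (Var 0) (Var 1) (Var 0) (Var 0)" | "\<sigma> = subst4 (Var 1) (Var 1) (Var 0) (Var 0)"
    unfolding pixley_substs_def by blast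
  then show ?thesis
  proof cases
    case 1
    then have "k (gen 3) = k (gen 0)" "k (gen 1) = k (gen 2)" using same by (simp_all add: subst4_def)
    then show ?thesis by simp
  next
    case 2
    then have "k (gen 3) = k (gen 0)" "k (gen 2) = k (gen 0)" using same by (simp_all add: subst4_def)
    then show ?thesis by simp
  next
    case 3
    then have "k (gen 3) = k (gen 2)" "k (gen 1) = k (gen 0)" using same by (simp_all add: subst4_def)
    then show ?thesis by simp
  qed
qed

definition F0 :: "('f, 'a) alg" where
  "F0 = F\<lparr>carrier := Sg ar F {gen 0, gen 1, gen 2}\<rparr>"

lemma K_epi_F0: "K_epi ar Qs F0 F id"
  unfolding K_epi_def
proof (intro conjI allI impI)
  have X: "{gen 0, gen 1, gen 2} \<subseteq> carrier F" using gen_in_F by auto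
  show "hom ar F0 F id"
    using Sg_subset_carrier[OF algebra_F X] by (auto simp: hom_def F0_def)
  fix C :: "('f, 'a) alg" and g h
  assume "in_qv ar Qs C \<and> hom ar F C g \<and> hom ar F C h \<and> (\<forall>x\<in>carrier F0. g (id x) = h (id x))"
  then have C: "in_qv ar Qs C" and g: "hom ar F C g" and h: "hom ar F C h"
    and gh: "\<forall>x\<in>carrier F0. g x = h x" by auto
  have "{gen 0, gen 1, gen 2} \<subseteq> carrier F0"
    using Sg_upper[of "{gen 0, gen 1, gen 2}" ar F] unfolding F0_def by simp
  then have gh012: "g (gen 0) = h (gen 0)" "g (gen 1) = h (gen 1)" "g (gen 2) = h (gen 2)"
    using gh by auto
  have "g (gen 3) = h (gen 3)"
  proof (rule ccontr)
    assume ne: "g (gen 3) \<noteq> h (gen 3)"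
    have c: "g (gen 3) \<in> carrier C" "h (gen 3) \<in> carrier C"
      using hom_into[OF g] hom_into[OF h] gen_in_F by auto
    obtain \<phi> where \<phi>: "K_congruence ar Qs C \<phi>" "(g (gen 3), h (gen 3)) \<notin> \<phi>"
      and D: "RFSI ar Qs (quot_rep C \<phi>)"
      using RFSI_separating_quotient[OF C c ne] by blast
    have r: "hom ar C (quot_rep C \<phi>) (rep_class \<phi>)"
      using hom_quot_rep[OF K_congruence_congruence[OF \<phi>(1)]] C by (simp add: in_qv_def)
    have "rep_class \<phi> (g (gen 3)) = rep_class \<phi> (h (gen 3))"
      using RFSI_hom_gen3[OF D hom_comp[OF g r]] RFSI_hom_gen3[OF D hom_comp[OF h r]] gh012
      by simp
    moreover have "equiv (carrier C) \<phi>"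
      using K_congruence_congruence[OF \<phi>(1)] by (simp add: congruence_def)
    ultimately show False using rep_class_eq_iff[OF _ c] \<phi>(2) by blast
  qed
  then have "\<forall>y\<in>Sg ar F {gen 0, gen 1, gen 2, gen 3}. g y = h y"
    using gen_in_F gh012 by (intro hom_eq_on_Sg[OF algebra_F g h]) auto
  then show "\<forall>y\<in>carrier F. g y = h y" using Sg_gen_F by simp
qed

lemma gen3_in_Sg:
  assumes wES: "weak_ES ar Qs TYPE('a)"
  shows "gen 3 \<in> Sg ar F {gen 0, gen 1, gen 2}"
proof -
  let ?X = "{gen 0, gen 1, gen 2}"
  have X: "?X \<subseteq> carrier F" using gen_in_F by auto
  have "in_qv ar Qs F0"
    unfolding F0_def by (rule in_qv_subalgebra[OF in_qv_F subuniverse_Sg[OF algebra_F X]]) simp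
  moreover have "fin_gen ar F0"
    unfolding fin_gen_def F0_def using Sg_carrier_update[OF algebra_F X] Sg_upper[of ?X]
    by (intro exI[of _ ?X]) auto
  moreover have "fin_gen ar F"
    unfolding fin_gen_def using Sg_gen_F gen_in_F
    by (intro exI[of _ "{gen 0, gen 1, gen 2, gen 3}"]) auto
  ultimately have "id ` carrier F0 = carrier F"
    using wES in_qv_F K_epi_F0 unfolding weak_ES_def by blast
  then show ?thesis using gen_in_F by (auto simp: F0_def)
qed

lemma pixley_term_exists:
  assumes "weak_ES ar Qs TYPE('a)"
  obtains t where "wf_trm ar t"
    and "\<And>\<sigma>. \<sigma> \<in> pixley_substs \<Longrightarrow> K_eq (Var 0) (subst (\<lambda>n. \<sigma> (min n 2)) t)"
proof -
  define \<rho> :: "nat \<Rightarrow> 'f trm" where "\<rho> n = Var (min n 2)" for n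
  define v where "v n = gen (min n 2)" for n
  have "range v = {gen 0, gen 1, gen 2}"
  proof
    have "v n \<in> {gen 0, gen 1, gen 2}" for n
    proof -
      have "min n 2 = 0 \<or> min n 2 = 1 \<or> min n (2::nat) = 2" unfolding min_def by presburger
      then show ?thesis unfolding v_def by (elim disjE) simp_all
    qed
    then show "range v \<subseteq> {gen 0, gen 1, gen 2}" by blast
    have "gen 0 = v 0" "gen 1 = v 1" "gen 2 = v 2" by (simp_all add: v_def)
    then show "{gen 0, gen 1, gen 2} \<subseteq> range v" by (metis insert_subset rangeI empty_subsetI)
  qed
  then have "gen 3 \<in> Sg ar F (range v)" using gen3_in_Sg[OF assms] by simp
  moreover have "range v \<subseteq> carrier F" using gen_in_F by (auto simp: v_def)
  ultimately have "gen 3 \<in> {eval F v t |t. wf_trm ar t}"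
    using Sg_range_eval[OF algebra_F] by blast
  then obtain t where t: "wf_trm ar t" "gen 3 = eval F v t" by blast
  have "eval F v t = e (term_rep (inst_eq pixley_substs) (subst \<rho> t))"
    using eval_term_alg[OF term_congruence_inst_eq _ t(1), of \<rho>]
    unfolding F_def v_def gen_def \<rho>_def by simp
  moreover have "wf_trm ar (subst \<rho> t)" using t(1) by (rule wf_subst) (simp add: \<rho>_def)
  ultimately have gen3: "inst_eq pixley_substs (Var 3) (subst \<rho> t)"
    using t(2) term_rep_eq_iff[OF term_congruence_inst_eq] by (simp add: gen_def)
  have "K_eq (Var 0) (subst (\<lambda>n. \<sigma> (min n 2)) t)" if \<sigma>: "\<sigma> \<in> pixley_substs" for \<sigma>
  proof -
    have "K_eq (\<sigma> 3) (subst \<sigma> (subst \<rho> t))" using gen3 \<sigma> by (simp add: inst_eq_def)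
    then show ?thesis using pixley_substs_3[OF \<sigma>] by (simp add: subst_subst \<rho>_def)
  qed
  with t(1) show thesis by (rule that)
qed

end

section \<open>Pixley terms and arithmeticity\<close>

lemma congruence_Int:
  assumes "congruence ar A \<theta>" "congruence ar A \<psi>"
  shows "congruence ar A (\<theta> \<inter> \<psi>)"
proof (rule congruenceI)
  show "equiv (carrier A) (\<theta> \<inter> \<psi>)"
    using assms unfolding congruence_def equiv_def refl_on_def sym_def trans_def by blast
  fix f xs ys assume l: "length xs = ar f" "length ys = ar f"
    and xys: "list_all2 (\<lambda>x y. (x, y) \<in> \<theta> \<inter> \<psi>) xs ys"
  have "list_all2 (\<lambda>x y. (x, y) \<in> \<theta>) xs ys" "list_all2 (\<lambda>x y. (x, y) \<in> \<psi>) xs ys"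
    using xys by (auto elim: list_all2_mono)
  then show "(oper A f xs, oper A f ys) \<in> \<theta> \<inter> \<psi>"
    using congruence_compat[OF assms(1) l] congruence_compat[OF assms(2) l] by blast
qed

lemma list_all2_relcomp:
  assumes "list_all2 (\<lambda>x y. (x, y) \<in> R O S) xs ys"
  obtains zs where "list_all2 (\<lambda>x y. (x, y) \<in> R) xs zs" "list_all2 (\<lambda>x y. (x, y) \<in> S) zs ys"
proof -
  from assms have "\<exists>zs. list_all2 (\<lambda>x y. (x, y) \<in> R) xs zs \<and> list_all2 (\<lambda>x y. (x, y) \<in> S) zs ys"
  proof (induction rule: list_all2_induct)
    case (Cons x xs y ys)
    then obtain z zs where "(x, z) \<in> R" "(z, y) \<in> S"
      "list_all2 (\<lambda>x y. (x, y) \<in> R) xs zs" "list_all2 (\<lambda>x y. (x, y) \<in> S) zs ys" by blast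
    then show ?case by (intro exI[of _ "z # zs"]) simp
  qed simp
  then show thesis using that by blast
qed

definition term_op3 :: "('f, 'b) alg \<Rightarrow> 'f trm \<Rightarrow> 'b \<Rightarrow> 'b \<Rightarrow> 'b \<Rightarrow> 'b" where
  "term_op3 B t a b c = eval B (\<lambda>n. if n = 0 then a else if n = 1 then b else c) t"

locale pixley_algebra =
  fixes ar :: "'f \<Rightarrow> nat" and B :: "('f, 'b) alg" and t :: "'f trm"
  assumes alg: "algebra ar B" and wf_t: "wf_trm ar t"
    and pixley_abb: "\<And>a b. a \<in> carrier B \<Longrightarrow> b \<in> carrier B \<Longrightarrow> term_op3 B t a b b = a"
    and pixley_aba: "\<And>a b. a \<in> carrier B \<Longrightarrow> b \<in> carrier B \<Longrightarrow> term_op3 B t a b a = a"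
    and pixley_bba: "\<And>a b. a \<in> carrier B \<Longrightarrow> b \<in> carrier B \<Longrightarrow> term_op3 B t b b a = a"
begin

lemma term_op3_congruence:
  assumes "congruence ar B \<theta>" "(a, a') \<in> \<theta>" "(b, b') \<in> \<theta>" "(c, c') \<in> \<theta>"
  shows "(term_op3 B t a b c, term_op3 B t a' b' c') \<in> \<theta>"
  unfolding term_op3_def by (rule congruence_eval[OF assms(1) _ wf_t]) (use assms in auto)

lemma relcomp_subset_commute:
  assumes \<theta>: "congruence ar B \<theta>" and \<psi>: "congruence ar B \<psi>"
  shows "\<theta> O \<psi> \<subseteq> \<psi> O \<theta>"
proof clarify
  fix a b c assume ab: "(a, b) \<in> \<theta>" and bc: "(b, c) \<in> \<psi>"
  then have abc: "a \<in> carrier B" "b \<in> carrier B" "c \<in> carrier B"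
    using congruence_subset[OF \<theta>] congruence_subset[OF \<psi>] by auto
  let ?d = "term_op3 B t a b c"
  have "(?d, term_op3 B t a b b) \<in> \<psi>"
    using term_op3_congruence[OF \<psi> congruence_refl[OF \<psi> abc(1)] congruence_refl[OF \<psi> abc(2)]
        congruence_sym[OF \<psi> bc]] .
  then have "(a, ?d) \<in> \<psi>" using pixley_abb[OF abc(1,2)] congruence_sym[OF \<psi>] by simp
  moreover have "(?d, term_op3 B t b b c) \<in> \<theta>"
    using term_op3_congruence[OF \<theta> ab congruence_refl[OF \<theta> abc(2)] congruence_refl[OF \<theta> abc(3)]] .
  then have "(?d, c) \<in> \<theta>" using pixley_bba[OF abc(3,2)] by simp
  ultimately show "(a, c) \<in> \<psi> O \<theta>" by blast
qed

lemma congruences_permute: "congruence ar B \<theta> \<Longrightarrow> congruence ar B \<psi> \<Longrightarrow> \<theta> O \<psi> = \<psi> O \<theta>"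
  using relcomp_subset_commute by blast

lemma congruence_relcomp:
  assumes \<theta>: "congruence ar B \<theta>" and \<psi>: "congruence ar B \<psi>"
  shows "congruence ar B (\<theta> O \<psi>)"
proof (rule congruenceI)
  have perm: "\<psi> O \<theta> = \<theta> O \<psi>" using congruences_permute[OF \<psi> \<theta>] .
  show "equiv (carrier B) (\<theta> O \<psi>)"
    unfolding equiv_def refl_on_def
  proof (intro conjI ballI)
    show "\<theta> O \<psi> \<subseteq> carrier B \<times> carrier B"
      using congruence_subset[OF \<theta>] congruence_subset[OF \<psi>] by blast
    show "(x, x) \<in> \<theta> O \<psi>" if "x \<in> carrier B" for x
      using congruence_refl[OF \<theta> that] congruence_refl[OF \<psi> that] by blast
    have "(\<theta> O \<psi>)\<inverse> = \<psi>\<inverse> O \<theta>\<inverse>" by blast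
    also have "\<dots> = \<psi> O \<theta>"
      using \<theta> \<psi> unfolding congruence_def equiv_def by (simp add: sym_conv_converse_eq)
    finally show "sym (\<theta> O \<psi>)" using perm by (simp add: sym_conv_converse_eq)
    have "(\<theta> O \<psi>) O (\<theta> O \<psi>) = \<theta> O (\<psi> O \<theta>) O \<psi>" by (simp add: O_assoc)
    also have "\<dots> = (\<theta> O \<theta>) O (\<psi> O \<psi>)" by (simp add: perm O_assoc)
    also have "\<dots> \<subseteq> \<theta> O \<psi>"
      using \<theta> \<psi> unfolding congruence_def equiv_def by (intro relcomp_mono trans_O_subset) auto
    finally show "trans (\<theta> O \<psi>)" unfolding trans_def by blast
  qed
next
  fix f xs ys assume l: "length xs = ar f" "length ys = ar f"
    and xys: "list_all2 (\<lambda>x y. (x, y) \<in> \<theta> O \<psi>) xs ys"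
  from xys obtain zs
    where zs: "list_all2 (\<lambda>x y. (x, y) \<in> \<theta>) xs zs" "list_all2 (\<lambda>x y. (x, y) \<in> \<psi>) zs ys"
    by (rule list_all2_relcomp)
  have lz: "length zs = ar f" using list_all2_lengthD[OF zs(1)] l by simp
  have "(oper B f xs, oper B f zs) \<in> \<theta>" by (rule congruence_compat[OF \<theta> l(1) lz zs(1)])
  moreover have "(oper B f zs, oper B f ys) \<in> \<psi>" by (rule congruence_compat[OF \<psi> lz l(2) zs(2)])
  ultimately show "(oper B f xs, oper B f ys) \<in> \<theta> O \<psi>" by blast
qed

lemma lat_join_Con:
  assumes \<theta>: "congruence ar B \<theta>" and \<psi>: "congruence ar B \<psi>"
  shows "lat_join (Con ar B) \<theta> \<psi> = \<theta> O \<psi>"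
proof
  have "\<theta> \<union> \<psi> \<subseteq> \<theta> O \<psi>"
  proof clarify
    fix x y assume "(x, y) \<in> \<theta> \<union> \<psi>"
    moreover from this have "x \<in> carrier B" "y \<in> carrier B"
      using congruence_subset[OF \<theta>] congruence_subset[OF \<psi>] by auto
    ultimately show "(x, y) \<in> \<theta> O \<psi>"
      using congruence_refl[OF \<theta>] congruence_refl[OF \<psi>] by blast
  qed
  then show "lat_join (Con ar B) \<theta> \<psi> \<subseteq> \<theta> O \<psi>"
    using congruence_relcomp[OF \<theta> \<psi>] by (intro lat_join_least) (simp_all add: Con_def)
  have "\<theta> O \<psi> \<subseteq> \<phi>" if \<phi>: "\<phi> \<in> Con ar B" "\<theta> \<union> \<psi> \<subseteq> \<phi>" for \<phi>
  proof clarify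
    fix x y z assume "(x, y) \<in> \<theta>" "(y, z) \<in> \<psi>"
    then have "(x, y) \<in> \<phi>" "(y, z) \<in> \<phi>" using \<phi>(2) by auto
    then show "(x, z) \<in> \<phi>" using \<phi>(1) congruence_trans[of ar B \<phi>] by (simp add: Con_def)
  qed
  then show "\<theta> O \<psi> \<subseteq> lat_join (Con ar B) \<theta> \<psi>" unfolding lat_join_def by blast
qed

text \<open>The witness is \<open>m = p(a, p(a, b, c), c)\<close>, which is congruent to \<open>a\<close> modulo \<open>\<theta> \<inter> \<psi>\<close>
  and to \<open>c\<close> modulo \<open>\<theta> \<inter> \<chi>\<close>.\<close>

lemma Int_relcomp_distrib:
  assumes \<theta>: "congruence ar B \<theta>" and \<psi>: "congruence ar B \<psi>" and \<chi>: "congruence ar B \<chi>"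
  shows "\<theta> \<inter> (\<psi> O \<chi>) = (\<theta> \<inter> \<psi>) O (\<theta> \<inter> \<chi>)"
proof
  show "(\<theta> \<inter> \<psi>) O (\<theta> \<inter> \<chi>) \<subseteq> \<theta> \<inter> (\<psi> O \<chi>)"
    using congruence_trans[OF \<theta>] by blast
  show "\<theta> \<inter> (\<psi> O \<chi>) \<subseteq> (\<theta> \<inter> \<psi>) O (\<theta> \<inter> \<chi>)"
  proof clarify
    fix a b c assume ac: "(a, c) \<in> \<theta>" and ab: "(a, b) \<in> \<psi>" and bc: "(b, c) \<in> \<chi>"
    then have abc: "a \<in> carrier B" "b \<in> carrier B" "c \<in> carrier B"
      using congruence_subset[OF \<psi>] congruence_subset[OF \<chi>] by auto
    let ?q = "term_op3 B t a b c"
    let ?m = "term_op3 B t a ?q c"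
    note refl = congruence_refl[OF _ abc(1)] congruence_refl[OF _ abc(2)] congruence_refl[OF _ abc(3)]
    have ca: "(c, a) \<in> \<theta>" using congruence_sym[OF \<theta> ac] .
    have "(?q, a) \<in> \<theta>"
      using term_op3_congruence[OF \<theta> refl(1)[OF \<theta>] refl(2)[OF \<theta>] ca] pixley_aba[OF abc(1,2)] by simp
    then have "(?m, term_op3 B t a a a) \<in> \<theta>"
      using term_op3_congruence[OF \<theta> refl(1)[OF \<theta>] _ ca] by blast
    then have m_a_\<theta>: "(?m, a) \<in> \<theta>" using pixley_abb[OF abc(1) abc(1)] by simp
    have "(?q, c) \<in> \<psi>"
      using term_op3_congruence[OF \<psi> refl(1)[OF \<psi>] congruence_sym[OF \<psi> ab] refl(3)[OF \<psi>]]
        pixley_bba[OF abc(3,1)] by simp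
    then have "(?m, term_op3 B t a c c) \<in> \<psi>"
      using term_op3_congruence[OF \<psi> refl(1)[OF \<psi>] _ refl(3)[OF \<psi>]] by blast
    then have m_a_\<psi>: "(?m, a) \<in> \<psi>" using pixley_abb[OF abc(1,3)] by simp
    have "(?q, a) \<in> \<chi>"
      using term_op3_congruence[OF \<chi> refl(1)[OF \<chi>] bc refl(3)[OF \<chi>]] pixley_abb[OF abc(1,3)] by simp
    then have "(?m, term_op3 B t a a c) \<in> \<chi>"
      using term_op3_congruence[OF \<chi> refl(1)[OF \<chi>] _ refl(3)[OF \<chi>]] by blast
    then have m_c_\<chi>: "(?m, c) \<in> \<chi>" using pixley_bba[OF abc(3,1)] by simp
    have "(?q, c) \<in> \<theta>"
      using term_op3_congruence[OF \<theta> ac refl(2)[OF \<theta>] refl(3)[OF \<theta>]] pixley_aba[OF abc(3,2)] by simp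
    then have "(?m, term_op3 B t c c c) \<in> \<theta>"
      using term_op3_congruence[OF \<theta> ac _ refl(3)[OF \<theta>]] by blast
    then have m_c_\<theta>: "(?m, c) \<in> \<theta>" using pixley_abb[OF abc(3,3)] by simp
    have "(a, ?m) \<in> \<theta> \<inter> \<psi>" using congruence_sym[OF \<theta> m_a_\<theta>] congruence_sym[OF \<psi> m_a_\<psi>] by blast
    moreover have "(?m, c) \<in> \<theta> \<inter> \<chi>" using m_c_\<theta> m_c_\<chi> by blast
    ultimately show "(a, c) \<in> (\<theta> \<inter> \<psi>) O (\<theta> \<inter> \<chi>)" by blast
  qed
qed

theorem arithmetical:
  "distrib_family (Con ar B) \<and> (\<forall>\<theta>\<in>Con ar B. \<forall>\<psi>\<in>Con ar B. \<theta> O \<psi> = \<psi> O \<theta>)"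
proof
  show "\<forall>\<theta>\<in>Con ar B. \<forall>\<psi>\<in>Con ar B. \<theta> O \<psi> = \<psi> O \<theta>"
    using congruences_permute by (auto simp: Con_def)
  show "distrib_family (Con ar B)"
    unfolding distrib_family_def
  proof (intro ballI)
    fix \<theta> \<psi> \<chi> assume "\<theta> \<in> Con ar B" "\<psi> \<in> Con ar B" "\<chi> \<in> Con ar B"
    then have c: "congruence ar B \<theta>" "congruence ar B \<psi>" "congruence ar B \<chi>" by (auto simp: Con_def)
    have "\<theta> \<inter> lat_join (Con ar B) \<psi> \<chi> = \<theta> \<inter> (\<psi> O \<chi>)" using lat_join_Con[OF c(2,3)] by simp
    also have "\<dots> = (\<theta> \<inter> \<psi>) O (\<theta> \<inter> \<chi>)" by (rule Int_relcomp_distrib[OF c])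
    also have "\<dots> = lat_join (Con ar B) (\<theta> \<inter> \<psi>) (\<theta> \<inter> \<chi>)"
      using lat_join_Con[OF congruence_Int[OF c(1,2)] congruence_Int[OF c(1,3)]] by simp
    finally show "\<theta> \<inter> lat_join (Con ar B) \<psi> \<chi> = lat_join (Con ar B) (\<theta> \<inter> \<psi>) (\<theta> \<inter> \<chi>)" .
  qed
qed

end

lemma eval_subst4_min2:
  "eval B w (subst (\<lambda>n. subst4 (Var i) (Var j) (Var k) d (min n 2)) t) =
    term_op3 B t (w i) (w j) (w k)"
proof -
  have "(\<lambda>n. eval B w (subst4 (Var i) (Var j) (Var k) (Var k) n)) =
      (\<lambda>n. if n = 0 then w i else if n = 1 then w j else w k)"
    by (simp add: subst4_def fun_eq_iff)
  then show ?thesis by (simp add: subst4_min2 eval_subst term_op3_def)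
qed

lemma (in term_encoding) pixley_algebra_in_var_gen:
  fixes B :: "('f, 'b) alg"
  assumes B: "in_var_gen ar Qs TYPE('a) B" and t: "wf_trm ar t"
    and K: "\<And>\<sigma>. \<sigma> \<in> pixley_substs \<Longrightarrow> K_eq (Var 0) (subst (\<lambda>n. \<sigma> (min n 2)) t)"
  shows "pixley_algebra ar B t"
proof
  show "algebra ar B" using B by (simp add: in_var_gen_def)
  show "wf_trm ar t" by (rule t)
  have B_eq: "eval B w (subst (\<lambda>n. \<sigma> (min n 2)) t) = w 0"
    if \<sigma>: "\<sigma> \<in> pixley_substs" and w: "range w \<subseteq> carrier B" for \<sigma> w
  proof -
    have "wf_trm ar (subst (\<lambda>n. \<sigma> (min n 2)) t)" using t pixley_substs_wf[OF \<sigma>] by (rule wf_subst)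
    then have "sat_qid B ([], (Var 0, subst (\<lambda>n. \<sigma> (min n 2)) t))"
      using B K[OF \<sigma>] unfolding in_var_gen_def K_eq_def by simp
    then show ?thesis using w by (simp add: sat_qid_def)
  qed
  fix a b assume ab: "a \<in> carrier B" "b \<in> carrier B"
  define w where "w n = (if n = 0 then a else b)" for n :: nat
  have w: "range w \<subseteq> carrier B" using ab by (auto simp: w_def)
  show "term_op3 B t a b b = a"
    using B_eq[OF _ w, of "subst4 (Var 0) (Var 1) (Var 1) (Var 0)"]
    by (simp add: pixley_substs_def eval_subst4_min2 w_def)
  show "term_op3 B t a b a = a"
    using B_eq[OF _ w, of "subst4 (Var 0) (Var 1) (Var 0) (Var 0)"]
    by (simp add: pixley_substs_def eval_subst4_min2 w_def)
  show "term_op3 B t b b a = a"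
    using B_eq[OF _ w, of "subst4 (Var 1) (Var 1) (Var 0) (Var 0)"]
    by (simp add: pixley_substs_def eval_subst4_min2 w_def)
qed

theorem mainTheorem16:
  fixes ar :: "'f \<Rightarrow> nat" and Qs :: "'f qid set"
  assumes "\<forall>q\<in>Qs. wf_qid ar q"
    and "\<exists>e :: 'f trm \<Rightarrow> 'a. inj e"
    and "rel_CD ar Qs TYPE('a)"
    and "RFSI_sub_closed ar Qs TYPE('a)"
    and "weak_ES ar Qs TYPE('a)"
  shows "\<forall>B :: ('f, 'b) alg. in_var_gen ar Qs TYPE('a) B \<longrightarrow>
           distrib_family (Con ar B) \<and>
           (\<forall>\<theta>1\<in>Con ar B. \<forall>\<theta>2\<in>Con ar B. \<theta>1 O \<theta>2 = \<theta>2 O \<theta>1)"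
proof (intro allI impI)
  obtain e :: "'f trm \<Rightarrow> 'a" where "inj e" using assms(2) by blast
  then interpret pixley_construction ar Qs e
    using assms(1,3,4) by unfold_locales
  obtain t where t: "wf_trm ar t" "\<And>\<sigma>. \<sigma> \<in> pixley_substs \<Longrightarrow> K_eq (Var 0) (subst (\<lambda>n. \<sigma> (min n 2)) t)"
    using pixley_term_exists[OF assms(5)] by blast
  fix B :: "('f, 'b) alg"
  assume "in_var_gen ar Qs TYPE('a) B"
  then interpret pixley_algebra ar B t
    using t by (rule pixley_algebra_in_var_gen)
  show "distrib_family (Con ar B) \<and> (\<forall>\<theta>1\<in>Con ar B. \<forall>\<theta>2\<in>Con ar B. \<theta>1 O \<theta>2 = \<theta>2 O \<theta>1)"
    by (rule arithmetical)
qed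

end
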